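(* Let $Q=Q_{\theta,t}(x)\subset\mathbb{R}^2$ be the boundary of a square centred at $x$ with side length $2t>0$, and let $L_1,\dots,L_4$ be its four sides. Let $u:Q\to\mathbb{S}^1$ be continuous, and set $d:=|\deg(u,Q)|$. For every $s_0\in(0,1)$ there exists $c=c(s_0)>0$, depending only on $s_0$, such that for every $s\in(s_0,1)$, $$\sum_{j=1}^4[u]^2_{H^{\frac{1+s}{2}}(L_j)}\ge c\,\frac{d}{1-s}\,t^{-s}.$$
   Context: For a segment $L\subset\mathbb{R}^2$, $[u]^2_{H^\alpha(L)}:=\iint_{L\times L}\frac{|u(x)-u(y)|^2}{|x-y|^{1+2\alpha}}\,d\mathcal{H}^1(x)\,d\mathcal{H}^1(y)$. $\deg(u,Q)$ is the degree of $u$ on the closed curve $Q$. *)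

theory Defs
  imports "HOL-Complex_Analysis.Complex_Analysis"
begin

text \<open>The plane R^2 is identified with the complex numbers; S^1 = sphere 0 1.\<close>

definition sq_vertex :: "complex \<Rightarrow> real \<Rightarrow> real \<Rightarrow> nat \<Rightarrow> complex" where
  "sq_vertex x theta t k = x + complex_of_real t * cis theta * (\<i> ^ (k mod 4)) * (1 + \<i>)"

definition sq_loop :: "complex \<Rightarrow> real \<Rightarrow> real \<Rightarrow> real \<Rightarrow> complex" where
  "sq_loop x theta t =
     linepath (sq_vertex x theta t 0) (sq_vertex x theta t 1) +++
     linepath (sq_vertex x theta t 1) (sq_vertex x theta t 2) +++
     linepath (sq_vertex x theta t 2) (sq_vertex x theta t 3) +++
     linepath (sq_vertex x theta t 3) (sq_vertex x theta t 0)"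

definition sq_boundary :: "complex \<Rightarrow> real \<Rightarrow> real \<Rightarrow> complex set" where
  "sq_boundary x theta t = (\<Union>k<4. closed_segment (sq_vertex x theta t k) (sq_vertex x theta t (Suc k)))"

definition deg_on_square :: "(complex \<Rightarrow> complex) \<Rightarrow> complex \<Rightarrow> real \<Rightarrow> real \<Rightarrow> complex" where
  "deg_on_square u x theta t = winding_number (u \<circ> sq_loop x theta t) 0"

text \<open>Gagliardo seminorm [u]^2_{H^alpha(L)} on the segment L = [a,b], with the
  1-dimensional Hausdorff measure on L written via the arc-length parametrisation
  r \<mapsto> a + r (b - a), r \<in> [0,1] (Jacobian |b - a|).\<close>
definition seg_seminorm_sq :: "(complex \<Rightarrow> complex) \<Rightarrow> complex \<Rightarrow> complex \<Rightarrow> real \<Rightarrow> ennreal" where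
  "seg_seminorm_sq u a b \<alpha> =
     (\<integral>\<^sup>+ p. indicator ({0..1} \<times> {0..1}) p *
        ennreal ((cmod (u (a + of_real (fst p) * (b - a)) - u (a + of_real (snd p) * (b - a))))\<^sup>2
                 / (cmod (of_real (fst p - snd p) * (b - a))) powr (1 + 2 * \<alpha>)
                 * (cmod (b - a))\<^sup>2)
      \<partial>(lborel \<Otimes>\<^sub>M lborel))"

end

theory Submission
  imports Defs
begin

text \<open>
  Parametrise each side by arc length and write \<open>u = exp (i \<phi>)\<close> with a continuous phase \<open>\<phi>\<close>. The degree
  is the sum of the windings of the four sides, so on some side \<open>\<phi>\<close> advances by at least \<open>d \<pi>/2\<close>. That
  side contains \<open>d\<close> disjoint intervals across each of which \<open>u\<close> jumps by \<open>\<surd>2\<close>, and the energy is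
  superadditive over disjoint intervals.

  On an interval of length \<open>l\<close> across which \<open>u\<close> jumps by at least \<open>1\<close>, let \<open>M(n,k)\<close> be the mean of \<open>u\<close>
  over the \<open>k\<close>-th dyadic cell of level \<open>n\<close>. By Jensen's inequality the energy dominates
  \<open>l^(-s)/16 \<Sum>\<^sub>n 2^(ns) A(n)\<close> with \<open>A(n) = \<Sum>\<^sub>k |M(n,k) - M(n,k+1)|\<^sup>2\<close>. If the energy were small,
  neighbouring means would differ by \<open>O(2^(-ns/2))\<close>, so the end means would converge geometrically to the
  end values and, from some level \<open>n\<^sub>1\<close> on, would still differ by \<open>1/2\<close>; then \<open>2^n A(n) \<ge> 1/4\<close>. Summing
  \<open>2^(ns) A(n) \<ge> 2^(n(s-1))/4\<close> over the next \<open>1/(1-s)\<close> levels, on which \<open>2^(n(s-1))\<close> is still bounded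
  below, yields the energy bound \<open>c l^(-s)/(1-s)\<close>.
\<close>

section \<open>Interval means\<close>

definition interval_mean :: "(real \<Rightarrow> complex) \<Rightarrow> real \<Rightarrow> real \<Rightarrow> complex" where
  "interval_mean g a b = integral {a..b} g / of_real (b - a)"

lemma interval_mean_sq_dist_le:
  fixes f :: "real \<Rightarrow> complex"
  assumes cf: "continuous_on {a..b} f" and ab: "a < b"
  shows "(b - a) * (cmod (interval_mean f a b - c))\<^sup>2 \<le> integral {a..b} (\<lambda>x. (cmod (f x - c))\<^sup>2)"
proof -
  define m where "m = interval_mean f a b"
  have pythagoras: "(cmod (f x - c))\<^sup>2 = (cmod (f x - m))\<^sup>2 + (cmod (m - c))\<^sup>2 + 2 * Re ((f x - m) * cnj (m - c))"
    for x
  proof -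
    have "(cmod (f x - c))\<^sup>2 = (cmod ((f x - m) + (m - c)))\<^sup>2" by simp
    also have "\<dots> = (cmod (f x - m))\<^sup>2 + (cmod (m - c))\<^sup>2 + 2 * Re ((f x - m) * cnj (m - c))"
      unfolding cmod_power2 by (simp add: power2_eq_square algebra_simps)
    finally show ?thesis .
  qed
  have int_dev: "(\<lambda>x. f x - m) integrable_on {a..b}"
    and int_dev_sq: "(\<lambda>x. (cmod (f x - m))\<^sup>2) integrable_on {a..b}"
    and int_cross: "(\<lambda>x. 2 * Re ((f x - m) * cnj (m - c))) integrable_on {a..b}"
    by (intro integrable_continuous_interval continuous_intros cf)+
  have lin: "bounded_linear (\<lambda>z. 2 * Re (z * cnj (m - c)))"
    by (intro bounded_linear_compose[OF bounded_linear_mult_right]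
        bounded_linear_compose[OF bounded_linear_Re bounded_linear_mult_left])
  have "integral {a..b} (\<lambda>x. f x - m) = 0"
    using ab by (simp add: m_def interval_mean_def integral_diff integrable_continuous_interval cf
        scaleR_conv_of_real)
  then have cross_zero: "integral {a..b} (\<lambda>x. 2 * Re ((f x - m) * cnj (m - c))) = 0"
    using integral_linear[OF int_dev lin] by (simp add: o_def)
  have "((\<lambda>x. (cmod (f x - c))\<^sup>2) has_integral
      integral {a..b} (\<lambda>x. (cmod (f x - m))\<^sup>2) + (b - a) *\<^sub>R (cmod (m - c))\<^sup>2 + 0) {a..b}"
    unfolding pythagoras
    by (intro has_integral_add integrable_integral int_dev_sq)
      (use has_integral_const_real[of "(cmod (m - c))\<^sup>2" a b] ab integrable_integral[OF int_cross]
        cross_zero in simp_all)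
  moreover have "0 \<le> integral {a..b} (\<lambda>x. (cmod (f x - m))\<^sup>2)"
    by (rule integral_nonneg[OF int_dev_sq]) simp
  ultimately show ?thesis by (simp add: m_def integral_unique)
qed

lemma nn_integral_Ico_eq_integral:
  fixes f :: "real \<Rightarrow> real"
  assumes "continuous_on {a..b} f" "\<And>x. 0 \<le> f x"
  shows "(\<integral>\<^sup>+x. indicator {a..<b} x * ennreal (f x) \<partial>lborel) = ennreal (integral {a..b} f)"
proof -
  have "negligible {x \<in> {a..b} - {a..<b}. f x \<noteq> 0}"
    by (rule negligible_subset[of "{b}"]) auto
  moreover have "negligible {x \<in> {a..<b} - {a..b}. f x \<noteq> 0}"
    by (rule negligible_subset[of "{}"]) auto
  moreover have "(f has_integral integral {a..b} f) {a..b}"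
    by (intro integrable_integral integrable_continuous_interval assms(1))
  ultimately have "(f has_integral integral {a..b} f) {a..<b}"
    using has_integral_spike_set_eq by blast
  from nn_integral_has_integral_lebesgue'[OF _ this] assms(2) show ?thesis
    by (simp add: mult.commute)
qed

lemma interval_mean_diff_sq_le:
  fixes g :: "real \<Rightarrow> complex"
  assumes cg: "continuous_on UNIV g" and ab: "a < b" and cd: "c < d"
  shows "ennreal ((b - a) * (d - c) * (cmod (interval_mean g a b - interval_mean g c d))\<^sup>2) \<le>
    (\<integral>\<^sup>+p. indicator ({a..<b} \<times> {c..<d}) p * ennreal ((cmod (g (fst p) - g (snd p)))\<^sup>2) \<partial>(lborel \<Otimes>\<^sub>M lborel))"
proof -
  have [measurable]: "g \<in> borel_measurable borel"
    using cg by (simp add: borel_measurable_continuous_onI)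
  define m where "m = interval_mean g c d"
  have inner: "(\<integral>\<^sup>+y. indicator ({a..<b} \<times> {c..<d}) (x, y) * ennreal ((cmod (g x - g y))\<^sup>2) \<partial>lborel)
      = indicator {a..<b} x * ennreal (integral {c..d} (\<lambda>y. (cmod (g y - g x))\<^sup>2))" for x
  proof (cases "x \<in> {a..<b}")
    case True
    have "(\<integral>\<^sup>+y. indicator ({a..<b} \<times> {c..<d}) (x, y) * ennreal ((cmod (g x - g y))\<^sup>2) \<partial>lborel)
       = (\<integral>\<^sup>+y. indicator {c..<d} y * ennreal ((cmod (g y - g x))\<^sup>2) \<partial>lborel)"
      using True by (intro nn_integral_cong) (auto simp: indicator_def norm_minus_commute)
    also have "\<dots> = ennreal (integral {c..d} (\<lambda>y. (cmod (g y - g x))\<^sup>2))"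
      by (rule nn_integral_Ico_eq_integral) (auto intro!: continuous_intros continuous_on_subset[OF cg])
    finally show ?thesis using True by simp
  next
    case False
    then have "(\<lambda>y. indicator ({a..<b} \<times> {c..<d}) (x, y) * ennreal ((cmod (g x - g y))\<^sup>2)) = (\<lambda>y. 0)"
      by (auto simp: indicator_def)
    then show ?thesis using False by simp
  qed
  have "(b - a) * (d - c) * (cmod (interval_mean g a b - m))\<^sup>2
      \<le> (d - c) * integral {a..b} (\<lambda>x. (cmod (g x - m))\<^sup>2)"
    using interval_mean_sq_dist_le[OF continuous_on_subset[OF cg] ab, of m] cd by simp
  also have "\<dots> = integral {a..b} (\<lambda>x. (d - c) * (cmod (g x - m))\<^sup>2)"
    by simp
  finally have "ennreal ((b - a) * (d - c) * (cmod (interval_mean g a b - m))\<^sup>2)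
      \<le> ennreal (integral {a..b} (\<lambda>x. (d - c) * (cmod (g x - m))\<^sup>2))"
    by (rule ennreal_leI)
  also have "\<dots> = (\<integral>\<^sup>+x. indicator {a..<b} x * ennreal ((d - c) * (cmod (g x - m))\<^sup>2) \<partial>lborel)"
    by (rule nn_integral_Ico_eq_integral[symmetric])
      (use cd in \<open>auto intro!: continuous_intros continuous_on_subset[OF cg]\<close>)
  also have "\<dots> \<le> (\<integral>\<^sup>+x. indicator {a..<b} x * ennreal (integral {c..d} (\<lambda>y. (cmod (g y - g x))\<^sup>2)) \<partial>lborel)"
    using interval_mean_sq_dist_le[OF continuous_on_subset[OF cg] cd]
    by (intro nn_integral_mono mult_left_mono ennreal_leI) (auto simp: m_def norm_minus_commute)
  also have "\<dots> = (\<integral>\<^sup>+p. indicator ({a..<b} \<times> {c..<d}) p * ennreal ((cmod (g (fst p) - g (snd p)))\<^sup>2)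
      \<partial>(lborel \<Otimes>\<^sub>M lborel))"
    using lborel.nn_integral_fst[of "\<lambda>p. indicator ({a..<b} \<times> {c..<d}) p * ennreal ((cmod (g (fst p) - g (snd p)))\<^sup>2)"]
    by (simp add: inner)
  finally show ?thesis by (simp add: m_def)
qed

lemma interval_mean_dist_le:
  fixes g :: "real \<Rightarrow> complex"
  assumes cg: "continuous_on {u..v} g" and uv: "u < v"
    and close: "\<And>x. x \<in> {u..v} \<Longrightarrow> cmod (g x - w) \<le> \<epsilon>"
  shows "cmod (interval_mean g u v - w) \<le> \<epsilon>"
proof -
  have "0 \<le> \<epsilon>" using order_trans[OF norm_ge_zero close[of u]] uv by simp
  moreover have "((\<lambda>x. g x - w) has_integral (integral {u..v} g - (v - u) *\<^sub>R w)) {u..v}"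
    using has_integral_const_real[of w u v] uv
    by (intro has_integral_diff integrable_integral integrable_continuous_interval cg) simp
  ultimately have "cmod (integral {u..v} g - (v - u) *\<^sub>R w) \<le> \<epsilon> * (v - u)"
    using has_integral_bound[of \<epsilon> "\<lambda>x. g x - w" _ u v] close uv by (simp add: cbox_interval)
  moreover have "interval_mean g u v - w = (integral {u..v} g - (v - u) *\<^sub>R w) / of_real (v - u)"
    using uv unfolding interval_mean_def by (simp add: field_simps scaleR_conv_of_real)
  ultimately show ?thesis
    using uv by (simp add: norm_divide pos_divide_le_eq del: of_real_diff)
qed

lemma interval_mean_bisect:
  fixes g :: "real \<Rightarrow> complex"
  assumes cg: "continuous_on {u..v} g" and uv: "u < v"
  shows "interval_mean g u v = (interval_mean g u ((u + v) / 2) + interval_mean g ((u + v) / 2) v) / 2"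
proof -
  have "integral {u..(u + v) / 2} g + integral {(u + v) / 2..v} g = integral {u..v} g"
    using uv by (intro Henstock_Kurzweil_Integration.integral_combine integrable_continuous_interval
        continuous_on_subset[OF cg]) auto
  moreover have "(u + v) / 2 - u = (v - u) / 2" "v - (u + v) / 2 = (v - u) / 2"
    by (simp_all add: field_simps)
  ultimately have halves:
    "interval_mean g u ((u + v) / 2) = 2 * integral {u..(u + v) / 2} g / of_real (v - u)"
    "interval_mean g ((u + v) / 2) v = 2 * integral {(u + v) / 2..v} g / of_real (v - u)"
    "interval_mean g u v = (integral {u..(u + v) / 2} g + integral {(u + v) / 2..v} g) / of_real (v - u)"
    unfolding interval_mean_def by (simp_all add: field_simps)
  have "(2 * A / D + 2 * B / D) / 2 = (A + B) / D" for A B D :: complex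
    by (cases "D = 0") (simp_all add: field_simps)
  then show ?thesis unfolding halves by (rule sym)
qed

lemma interval_mean_shrinking_tendsto:
  fixes g :: "real \<Rightarrow> complex"
  assumes cg: "continuous_on UNIV g" and uv: "\<And>j. u j < v j"
    and z: "\<And>j. u j \<le> z" "\<And>j. z \<le> v j" and shrink: "(\<lambda>j. v j - u j) \<longlonglongrightarrow> 0"
  shows "(\<lambda>j. interval_mean g (u j) (v j)) \<longlonglongrightarrow> g z"
proof (rule LIMSEQ_I)
  fix \<epsilon> :: real assume "0 < \<epsilon>"
  then have "0 < \<epsilon> / 2" by simp
  moreover have "isCont g z" using cg by (simp add: continuous_on_eq_continuous_at)
  ultimately obtain \<delta> where "0 < \<delta>" and \<delta>: "\<And>x. dist x z < \<delta> \<Longrightarrow> dist (g x) (g z) < \<epsilon> / 2"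
    unfolding continuous_at_eps_delta by blast
  then obtain J where J: "\<And>j. J \<le> j \<Longrightarrow> norm (v j - u j - 0) < \<delta>"
    using LIMSEQ_D[OF shrink] by blast
  have "cmod (interval_mean g (u j) (v j) - g z) < \<epsilon>" if "J \<le> j" for j
  proof -
    have "cmod (interval_mean g (u j) (v j) - g z) \<le> \<epsilon> / 2"
    proof (rule interval_mean_dist_le[OF continuous_on_subset[OF cg] uv])
      fix x assume "x \<in> {u j..v j}"
      then have "dist x z < \<delta>" using J[OF that] z[of j] by (auto simp: dist_real_def)
      then show "cmod (g x - g z) \<le> \<epsilon> / 2" using \<delta> by (simp add: dist_norm less_imp_le)
    qed auto
    then show ?thesis using \<open>0 < \<epsilon>\<close> by linarith
  qed
  then show "\<exists>J. \<forall>j\<ge>J. norm (interval_mean g (u j) (v j) - g z) < \<epsilon>" by blast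
qed

section \<open>Dyadic means and the fractional energy\<close>

definition dyadic_pt :: "real \<Rightarrow> real \<Rightarrow> nat \<Rightarrow> nat \<Rightarrow> real" where
  "dyadic_pt a l n k = a + real k * (l / 2^n)"

definition dyadic_cell :: "real \<Rightarrow> real \<Rightarrow> nat \<Rightarrow> nat \<Rightarrow> real set" where
  "dyadic_cell a l n k = {dyadic_pt a l n k ..< dyadic_pt a l n (Suc k)}"

definition dyadic_mean :: "(real \<Rightarrow> complex) \<Rightarrow> real \<Rightarrow> real \<Rightarrow> nat \<Rightarrow> nat \<Rightarrow> complex" where
  "dyadic_mean g a l n k = interval_mean g (dyadic_pt a l n k) (dyadic_pt a l n (Suc k))"

definition dyadic_variation :: "(real \<Rightarrow> complex) \<Rightarrow> real \<Rightarrow> real \<Rightarrow> nat \<Rightarrow> real" where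
  "dyadic_variation g a l n = (\<Sum>k<2^n-1. (cmod (dyadic_mean g a l n k - dyadic_mean g a l n (Suc k)))\<^sup>2)"

text \<open>The squared seminorm of \<open>H\<^bsup>(1+s)/2\<^esup>\<close> on \<open>A \<subseteq> \<real>\<close>: the kernel exponent is \<open>1 + 2 \<cdot> (1+s)/2 = 2 + s\<close>.\<close>
definition frac_energy :: "(real \<Rightarrow> complex) \<Rightarrow> real \<Rightarrow> real set \<Rightarrow> ennreal" where
  "frac_energy g s A = (\<integral>\<^sup>+p. indicator (A \<times> A) p *
      ennreal ((cmod (g (fst p) - g (snd p)))\<^sup>2 / \<bar>fst p - snd p\<bar> powr (2 + s)) \<partial>(lborel \<Otimes>\<^sub>M lborel))"

lemma dyadic_pt_Suc_diff: "dyadic_pt a l n (Suc k) - dyadic_pt a l n k = l / 2^n"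
  unfolding dyadic_pt_def by (simp add: field_simps)

lemma dyadic_pt_less: "0 < l \<Longrightarrow> dyadic_pt a l n k < dyadic_pt a l n (Suc k)"
  using dyadic_pt_Suc_diff[of a l n k] by (metis diff_gt_0_iff_gt divide_pos_pos zero_less_numeral zero_less_power)

lemma dyadic_pt_last [simp]: "dyadic_pt a l n (2^n) = a + l"
  and dyadic_pt_double [simp]: "dyadic_pt a l (Suc n) (2 * k) = dyadic_pt a l n k"
  unfolding dyadic_pt_def by (simp_all add: field_simps)

lemma dyadic_pt_odd: "dyadic_pt a l (Suc n) (Suc (2 * k)) = (dyadic_pt a l n k + dyadic_pt a l n (Suc k)) / 2"
  unfolding dyadic_pt_def by (simp add: field_simps)

lemma dyadic_cell_subset:
  assumes "0 < l" "k < 2^n"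
  shows "dyadic_cell a l n k \<subseteq> {a..<a + l}"
proof -
  have "real (Suc k) \<le> real (2^n)" using assms by (simp only: of_nat_le_iff Suc_le_eq)
  then have "real (Suc k) * (l / 2^n) \<le> real (2^n) * (l / 2^n)"
    using assms by (intro mult_right_mono) auto
  then show ?thesis unfolding dyadic_cell_def dyadic_pt_def using assms by auto
qed

lemma dyadic_cell_unique:
  assumes "0 < l" "x \<in> dyadic_cell a l n k" "x \<in> dyadic_cell a l n k'"
  shows "k = k'"
proof (rule ccontr)
  assume "k \<noteq> k'"
  then consider "Suc k \<le> k'" | "Suc k' \<le> k" by linarith
  then show False
  proof cases
    case 1
    then have "real (Suc k) * (l / 2^n) \<le> real k' * (l / 2^n)"
      using assms by (intro mult_right_mono) auto
    then show False using assms unfolding dyadic_cell_def dyadic_pt_def by auto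
  next
    case 2
    then have "real (Suc k') * (l / 2^n) \<le> real k * (l / 2^n)"
      using assms by (intro mult_right_mono) auto
    then show False using assms unfolding dyadic_cell_def dyadic_pt_def by auto
  qed
qed

lemma dyadic_mean_bisect:
  fixes g :: "real \<Rightarrow> complex"
  assumes "continuous_on UNIV g" "0 < l"
  shows "dyadic_mean g a l n k =
    (dyadic_mean g a l (Suc n) (2 * k) + dyadic_mean g a l (Suc n) (Suc (2 * k))) / 2"
  using interval_mean_bisect[OF continuous_on_subset[OF assms(1)] dyadic_pt_less[OF assms(2)], of a n k]
    dyadic_pt_double[of a l n "Suc k"]
  unfolding dyadic_mean_def dyadic_pt_odd by simp

lemma sum_le_if_at_most_one_nonzero:
  fixes f :: "'a \<Rightarrow> real"
  assumes "finite K" "\<And>k. k \<in> K \<Longrightarrow> 0 \<le> f k \<and> f k \<le> B" "0 \<le> B"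
    and "\<And>k k'. k \<in> K \<Longrightarrow> k' \<in> K \<Longrightarrow> f k \<noteq> 0 \<Longrightarrow> f k' \<noteq> 0 \<Longrightarrow> k = k'"
  shows "sum f K \<le> B"
proof (cases "\<exists>k\<in>K. f k \<noteq> 0")
  case True
  then obtain k0 where k0: "k0 \<in> K" "f k0 \<noteq> 0" by blast
  have "sum f K = f k0 + sum f (K - {k0})"
    using assms(1) k0 by (simp add: sum.remove)
  also have "sum f (K - {k0}) = 0"
    using assms(4)[OF k0(1) _ k0(2)] by (intro sum.neutral) auto
  finally show ?thesis using assms(2)[OF k0(1)] by simp
next
  case False
  then have "sum f K = 0" by (intro sum.neutral) auto
  then show ?thesis using assms by simp
qed

lemma sum_powers_of_two_below_le:
  fixes X :: real
  assumes "0 < X"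
  shows "(\<Sum>n\<le>N. if 2^n < X then (2::real)^n else 0) \<le> 2 * X \<and>
         (\<Sum>n\<le>N. if 2^n < X then (2::real)^n else 0) \<le> 2^(Suc N) - 1"
proof (induction N)
  case 0
  show ?case using assms by (cases "1 < X") simp_all
next
  case (Suc N)
  define S where "S = (\<Sum>n\<le>N. if 2^n < X then (2::real)^n else 0)"
  have S_Suc: "(\<Sum>n\<le>Suc N. if 2^n < X then (2::real)^n else 0)
      = S + (if 2^(Suc N) < X then (2::real)^(Suc N) else 0)"
    unfolding S_def by (rule sum.atMost_Suc)
  have facts: "S \<le> 2 * X" "S \<le> 2 * 2^N - 1" "(0::real) \<le> 2^N"
    "(2::real)^Suc N = 2 * 2^N" "(2::real)^Suc (Suc N) = 4 * 2^N"
    using Suc unfolding S_def by auto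
  show ?case
  proof (cases "(2::real)^(Suc N) < X")
    case True
    then show ?thesis unfolding S_Suc if_P[OF True] using facts by (intro conjI; linarith)
  next
    case False
    then show ?thesis unfolding S_Suc if_not_P[OF False] using facts by (intro conjI; linarith)
  qed
qed

lemma sum_powr_powers_of_two_below_le:
  fixes X q :: real
  assumes "0 < X" "1 \<le> q"
  shows "(\<Sum>n\<le>N. if 2^n < X then ((2::real)^n) powr q else 0) \<le> 2 * X powr q"
proof -
  have "z powr q \<le> X powr (q - 1) * z" if "0 < z" "z < X" for z
  proof -
    have "z powr q = z powr (q - 1) * z" using that powr_add[of z "q - 1" 1] by simp
    also have "\<dots> \<le> X powr (q - 1) * z"
      using assms that by (intro mult_right_mono powr_mono2) auto
    finally show ?thesis .
  qed
  then have "(\<Sum>n\<le>N. if 2^n < X then ((2::real)^n) powr q else 0)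
      \<le> (\<Sum>n\<le>N. X powr (q - 1) * (if 2^n < X then (2::real)^n else 0))"
    by (intro sum_mono) auto
  also have "\<dots> = X powr (q - 1) * (\<Sum>n\<le>N. if 2^n < X then (2::real)^n else 0)"
    by (simp add: sum_distrib_left)
  also have "\<dots> \<le> X powr (q - 1) * (2 * X)"
    using sum_powers_of_two_below_le[OF assms(1), of N] by (intro mult_left_mono) auto
  also have "\<dots> = 2 * X powr q"
    using assms by (simp add: powr_diff field_simps)
  finally show ?thesis .
qed

lemma adjacent_dyadic_cells_indicator_sum_le:
  fixes x y a l :: real
  assumes l: "0 < l"
  shows "(\<Sum>k<2^n-1. indicator (dyadic_cell a l n k) x * indicator (dyadic_cell a l n (Suc k)) y)
          \<le> (if 2^n < 2 * l / (y - x) \<and> x < y then (1::real) else 0)"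
proof (rule sum_le_if_at_most_one_nonzero)
  fix k :: nat
  show "(0::real) \<le> indicator (dyadic_cell a l n k) x * indicator (dyadic_cell a l n (Suc k)) y \<and>
      indicator (dyadic_cell a l n k) x * indicator (dyadic_cell a l n (Suc k)) y
      \<le> (if 2^n < 2 * l / (y - x) \<and> x < y then (1::real) else 0)"
  proof (cases "x \<in> dyadic_cell a l n k \<and> y \<in> dyadic_cell a l n (Suc k)")
    case True
    define h where "h = l / 2^n"
    have "a + real k * h \<le> x" "x < a + real (Suc k) * h" "a + real (Suc k) * h \<le> y"
       "y < a + real (Suc (Suc k)) * h"
      using True unfolding dyadic_cell_def dyadic_pt_def h_def by auto
    then have "x < y" "y - x < 2 * h" by (simp_all add: algebra_simps)
    then have "2^n < 2 * l / (y - x)" unfolding h_def by (simp add: field_simps)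
    then show ?thesis using True \<open>x < y\<close> by (simp add: indicator_def)
  qed (auto simp: indicator_def)
next
  fix k k' :: nat
  assume "indicator (dyadic_cell a l n k) x * indicator (dyadic_cell a l n (Suc k)) y \<noteq> (0::real)"
    "indicator (dyadic_cell a l n k') x * indicator (dyadic_cell a l n (Suc k')) y \<noteq> (0::real)"
  then have "x \<in> dyadic_cell a l n k" "x \<in> dyadic_cell a l n k'"
    by (auto simp: indicator_def split: if_splits)
  then show "k = k'" using dyadic_cell_unique l by blast
qed auto

text \<open>Each pair \<open>(x, y)\<close> lies in adjacent cells of level \<open>n\<close> only if \<open>2\<^sup>n < 2 l / (y - x)\<close>, so the
  levels it sees form a geometric sum dominated by its largest term.\<close>
lemma dyadic_adjacent_weight_le:
  fixes x y a l s :: real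
  assumes l: "0 < l" and s: "0 \<le> s" "s \<le> 1"
  shows "(\<Sum>n\<le>N. (2^n) powr (2 + s) *
            (\<Sum>k<2^n-1. indicator (dyadic_cell a l n k) x * indicator (dyadic_cell a l n (Suc k)) y))
         * \<bar>x - y\<bar> powr (2 + s) \<le> 16 * l powr (2 + s)"
proof (cases "x < y")
  case True
  define X where "X = 2 * l / (y - x)"
  have X: "0 < X" using True l by (simp add: X_def)
  have "(\<Sum>n\<le>N. (2^n) powr (2 + s) *
          (\<Sum>k<2^n-1. indicator (dyadic_cell a l n k) x * indicator (dyadic_cell a l n (Suc k)) y))
      \<le> (\<Sum>n\<le>N. if 2^n < X then ((2::real)^n) powr (2 + s) else 0)"
  proof (intro sum_mono)
    fix n
    have "(2^n) powr (2 + s) *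
          (\<Sum>k<2^n-1. indicator (dyadic_cell a l n k) x * indicator (dyadic_cell a l n (Suc k)) y)
        \<le> (2^n) powr (2 + s) * (if 2^n < X \<and> x < y then (1::real) else 0)"
      unfolding X_def by (rule mult_left_mono[OF adjacent_dyadic_cells_indicator_sum_le[OF l]]) simp
    then show "(2^n) powr (2 + s) *
          (\<Sum>k<2^n-1. indicator (dyadic_cell a l n k) x * indicator (dyadic_cell a l n (Suc k)) y)
        \<le> (if 2^n < X then ((2::real)^n) powr (2 + s) else 0)"
      using True by (simp split: if_splits add: mult_nonneg_nonpos del: sum_mult_indicator)
  qed
  also have "\<dots> \<le> 2 * X powr (2 + s)"
    using sum_powr_powers_of_two_below_le[OF X, of "2 + s" N] s by simp
  finally have sum_le: "(\<Sum>n\<le>N. (2^n) powr (2 + s) *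
          (\<Sum>k<2^n-1. indicator (dyadic_cell a l n k) x * indicator (dyadic_cell a l n (Suc k)) y))
      \<le> 2 * X powr (2 + s)" .
  have "2 * X powr (2 + s) * \<bar>x - y\<bar> powr (2 + s) = 2 * 2 powr (2 + s) * l powr (2 + s)"
    using True l by (simp add: X_def powr_divide powr_mult abs_if)
  also have "\<dots> \<le> 2 * 2 powr 3 * l powr (2 + s)"
    using s by (intro mult_right_mono mult_left_mono powr_mono) auto
  finally show ?thesis
    using mult_right_mono[OF sum_le, of "\<bar>x - y\<bar> powr (2 + s)"] by simp
next
  case False
  then have "indicator (dyadic_cell a l n k) x * indicator (dyadic_cell a l n (Suc k)) y = (0::real)" for n k
    using l unfolding dyadic_cell_def dyadic_pt_def indicator_def by auto
  then have "(\<Sum>k<2^n-1. indicator (dyadic_cell a l n k) x * indicator (dyadic_cell a l n (Suc k)) y) = (0::real)"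
    for n by (intro sum.neutral) auto
  then show ?thesis using l by simp
qed

lemma dyadic_adjacent_sum_le_kernel:
  fixes x y a l s G :: real
  assumes l: "0 < l" and s: "0 \<le> s" "s \<le> 1" and G: "0 \<le> G"
  shows "(\<Sum>n\<le>N. \<Sum>k<2^n-1. (2^n) powr (2 + s) / (16 * l powr (2 + s)) *
            (indicator (dyadic_cell a l n k) x * indicator (dyadic_cell a l n (Suc k)) y) * G)
         \<le> indicator ({a..<a + l} \<times> {a..<a + l}) (x, y) * (G / \<bar>x - y\<bar> powr (2 + s))"
proof (cases "x \<in> {a..<a + l} \<and> y \<in> {a..<a + l} \<and> x \<noteq> y")
  case True
  have "(\<Sum>n\<le>N. \<Sum>k<2^n-1. (2^n) powr (2 + s) / (16 * l powr (2 + s)) *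
            (indicator (dyadic_cell a l n k) x * indicator (dyadic_cell a l n (Suc k)) y) * G)
      = G / (16 * l powr (2 + s)) * (\<Sum>n\<le>N. (2^n) powr (2 + s) *
            (\<Sum>k<2^n-1. indicator (dyadic_cell a l n k) x * indicator (dyadic_cell a l n (Suc k)) y))"
    unfolding sum_distrib_left by (intro sum.cong refl) (simp add: mult_ac)
  also have "\<dots> \<le> G / (16 * l powr (2 + s)) * (16 * l powr (2 + s) / \<bar>x - y\<bar> powr (2 + s))"
    using dyadic_adjacent_weight_le[OF l s, where N=N and a=a and x=x and y=y] True G l
    by (intro mult_left_mono) (simp_all add: field_simps)
  also have "\<dots> = G / \<bar>x - y\<bar> powr (2 + s)" using l by simp
  finally show ?thesis using True by simp
next
  case False
  have "indicator (dyadic_cell a l n k) x * indicator (dyadic_cell a l n (Suc k)) y = (0::real)"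
    if "k < 2^n - 1" for n k
  proof -
    have "dyadic_cell a l n k \<subseteq> {a..<a + l}" "dyadic_cell a l n (Suc k) \<subseteq> {a..<a + l}"
      using that l by (intro dyadic_cell_subset; simp)+
    moreover have "x \<in> dyadic_cell a l n k \<Longrightarrow> y \<in> dyadic_cell a l n (Suc k) \<Longrightarrow> x \<noteq> y"
      unfolding dyadic_cell_def dyadic_pt_def using l by auto
    ultimately show ?thesis using False by (auto simp: indicator_def)
  qed
  then have "(\<Sum>n\<le>N. \<Sum>k<2^n-1. (2^n) powr (2 + s) / (16 * l powr (2 + s)) *
            (indicator (dyadic_cell a l n k) x * indicator (dyadic_cell a l n (Suc k)) y) * G) = 0"
    by (intro sum.neutral ballI) simp
  then show ?thesis using G by simp
qed

lemma ennreal_double_sum: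
  fixes f :: "'a \<Rightarrow> 'b \<Rightarrow> real"
  assumes "\<And>n k. 0 \<le> f n k"
  shows "ennreal (\<Sum>n\<in>A. \<Sum>k\<in>B n. f n k) = (\<Sum>n\<in>A. \<Sum>k\<in>B n. ennreal (f n k))"
  using assms by (simp add: sum_ennreal sum_nonneg)

lemma frac_energy_ge_adjacent_cell_pairs:
  fixes g :: "real \<Rightarrow> complex"
  assumes cg: "continuous_on UNIV g" and l: "0 < l" and s: "0 \<le> s" "s \<le> 1"
  shows "(\<Sum>n\<le>N. \<Sum>k<2^n-1. ennreal ((2^n) powr (2 + s) / (16 * l powr (2 + s))) *
      (\<integral>\<^sup>+p. indicator (dyadic_cell a l n k \<times> dyadic_cell a l n (Suc k)) p *
        ennreal ((cmod (g (fst p) - g (snd p)))\<^sup>2) \<partial>(lborel \<Otimes>\<^sub>M lborel)))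
    \<le> frac_energy g s {a..<a + l}"
proof -
  have [measurable]: "g \<in> borel_measurable borel"
    using cg by (simp add: borel_measurable_continuous_onI)
  define c where "c n = (2^n) powr (2 + s) / (16 * l powr (2 + s))" for n :: nat
  define G where "G p = (cmod (g (fst p) - g (snd p)))\<^sup>2" for p :: "real \<times> real"
  define I where "I n k p = indicator (dyadic_cell a l n k \<times> dyadic_cell a l n (Suc k)) p * ennreal (G p)"
    for n k p
  have c_nonneg: "0 \<le> c n" for n unfolding c_def by simp
  have [measurable]: "I n k \<in> borel_measurable (lborel \<Otimes>\<^sub>M lborel)" for n k
    unfolding I_def G_def dyadic_cell_def by measurable
  have "(\<Sum>n\<le>N. \<Sum>k<2^n-1. ennreal (c n) * (\<integral>\<^sup>+p. I n k p \<partial>(lborel \<Otimes>\<^sub>M lborel)))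
      = (\<integral>\<^sup>+p. (\<Sum>n\<le>N. \<Sum>k<2^n-1. ennreal (c n) * I n k p) \<partial>(lborel \<Otimes>\<^sub>M lborel))"
    by (simp add: nn_integral_sum nn_integral_cmult)
  also have "\<dots> \<le> frac_energy g s {a..<a + l}"
    unfolding frac_energy_def
  proof (intro nn_integral_mono)
    fix p :: "real \<times> real"
    obtain x y where p: "p = (x, y)" by (cases p)
    have "(\<Sum>n\<le>N. \<Sum>k<2^n-1. ennreal (c n) * I n k p)
        = ennreal (\<Sum>n\<le>N. \<Sum>k<2^n-1.
            c n * (indicator (dyadic_cell a l n k) x * indicator (dyadic_cell a l n (Suc k)) y) * G p)"
      unfolding I_def p using c_nonneg
      by (subst ennreal_double_sum) (auto simp: G_def indicator_def ennreal_mult intro!: sum.cong)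
    also have "\<dots> \<le> ennreal (indicator ({a..<a + l} \<times> {a..<a + l}) p * (G p / \<bar>x - y\<bar> powr (2 + s)))"
      unfolding c_def p using dyadic_adjacent_sum_le_kernel[OF l s, where G="G (x, y)" and N=N and a=a and x=x and y=y]
      by (intro ennreal_leI) (simp add: G_def)
    also have "\<dots> = indicator ({a..<a + l} \<times> {a..<a + l}) p * ennreal (G p / \<bar>x - y\<bar> powr (2 + s))"
      by (simp add: indicator_def)
    finally show "(\<Sum>n\<le>N. \<Sum>k<2^n-1. ennreal (c n) * I n k p)
        \<le> indicator ({a..<a + l} \<times> {a..<a + l}) p *
          ennreal ((cmod (g (fst p) - g (snd p)))\<^sup>2 / \<bar>fst p - snd p\<bar> powr (2 + s))"
      unfolding p G_def by simp
  qed
  finally show ?thesis unfolding c_def I_def G_def .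
qed

lemma frac_energy_ge_dyadic_variation:
  fixes g :: "real \<Rightarrow> complex"
  assumes cg: "continuous_on UNIV g" and l: "0 < l" and s: "0 \<le> s" "s \<le> 1"
  shows "ennreal (l powr (-s) / 16 * (\<Sum>n\<le>N. (2^n) powr s * dyadic_variation g a l n))
         \<le> frac_energy g s {a..<a + l}"
proof -
  define c where "c n = (2^n) powr (2 + s) / (16 * l powr (2 + s))" for n :: nat
  define J where "J n k = (\<integral>\<^sup>+p. indicator (dyadic_cell a l n k \<times> dyadic_cell a l n (Suc k)) p *
      ennreal ((cmod (g (fst p) - g (snd p)))\<^sup>2) \<partial>(lborel \<Otimes>\<^sub>M lborel))" for n k
  have c_nonneg: "0 \<le> c n" for n unfolding c_def by simp
  have c_weight: "c n * ((l / 2^n) * (l / 2^n) * X) = l powr (-s) / 16 * ((2^n) powr s * X)" for n X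
  proof -
    have "((2::real)^n) powr (2 + s) = (2^n)^2 * (2^n) powr s" "l powr (2 + s) = l^2 * l powr s"
      using l by (simp_all add: powr_add powr_numeral)
    then show ?thesis using l unfolding c_def by (simp add: powr_minus field_simps power2_eq_square)
  qed
  have weights: "l powr (-s) / 16 * (\<Sum>n\<le>N. (2^n) powr s * dyadic_variation g a l n)
      = (\<Sum>n\<le>N. \<Sum>k<2^n-1. c n * ((l / 2^n) * (l / 2^n) *
          (cmod (dyadic_mean g a l n k - dyadic_mean g a l n (Suc k)))\<^sup>2))"
    unfolding dyadic_variation_def by (simp only: c_weight sum_distrib_left)
  have "ennreal (l powr (-s) / 16 * (\<Sum>n\<le>N. (2^n) powr s * dyadic_variation g a l n))
      = (\<Sum>n\<le>N. \<Sum>k<2^n-1. ennreal (c n * ((l / 2^n) * (l / 2^n) *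
          (cmod (dyadic_mean g a l n k - dyadic_mean g a l n (Suc k)))\<^sup>2)))"
    unfolding weights by (rule ennreal_double_sum) (simp add: c_nonneg)
  also have "\<dots> \<le> (\<Sum>n\<le>N. \<Sum>k<2^n-1. ennreal (c n) * J n k)"
  proof (intro sum_mono)
    fix n k
    have "ennreal ((l / 2^n) * (l / 2^n) * (cmod (dyadic_mean g a l n k - dyadic_mean g a l n (Suc k)))\<^sup>2)
        \<le> J n k" (is "ennreal ?X \<le> _")
      using interval_mean_diff_sq_le[OF cg dyadic_pt_less[OF l] dyadic_pt_less[OF l], of a n k a n "Suc k"]
      unfolding J_def dyadic_cell_def dyadic_mean_def dyadic_pt_Suc_diff by simp
    then have "ennreal (c n) * ennreal ?X \<le> ennreal (c n) * J n k" by (rule mult_left_mono) simp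
    moreover have "ennreal (c n * ?X) = ennreal (c n) * ennreal ?X"
      using c_nonneg[of n] by (intro ennreal_mult) auto
    ultimately show "ennreal (c n * ?X) \<le> ennreal (c n) * J n k" by simp
  qed
  also have "\<dots> \<le> frac_energy g s {a..<a + l}"
    unfolding c_def J_def by (rule frac_energy_ge_adjacent_cell_pairs[OF cg l s])
  finally show ?thesis .
qed

section \<open>Energy across a jump\<close>

lemma norm_telescope_sq_le:
  fixes e :: "nat \<Rightarrow> 'a::real_normed_vector"
  shows "(norm (e K - e 0))\<^sup>2 \<le> real K * (\<Sum>k<K. (norm (e (Suc k) - e k))\<^sup>2)"
proof -
  have "norm (e K - e 0) \<le> (\<Sum>k<K. norm (e (Suc k) - e k))"
    using norm_sum[of "\<lambda>k. e (Suc k) - e k" "{..<K}"] by (simp add: sum_lessThan_telescope)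
  then have "(norm (e K - e 0))\<^sup>2 \<le> (\<Sum>k<K. norm (e (Suc k) - e k) * 1)\<^sup>2"
    by (intro power_mono) auto
  also have "\<dots> \<le> (\<Sum>k<K. (norm (e (Suc k) - e k))\<^sup>2) * (\<Sum>k<K. 1\<^sup>2)"
    by (rule Cauchy_Schwarz_ineq_sum)
  finally show ?thesis by (simp add: mult.commute)
qed

lemma dist_limit_le_geometric_tail:
  fixes e :: "nat \<Rightarrow> 'a::real_normed_vector"
  assumes \<rho>: "0 \<le> \<rho>" "\<rho> < 1" and C: "0 \<le> C"
    and step: "\<And>j. norm (e (Suc j) - e j) \<le> C * \<rho>^(Suc j)"
    and lim: "e \<longlonglongrightarrow> z"
  shows "norm (z - e n) \<le> C * \<rho>^(Suc n) / (1 - \<rho>)"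
proof -
  define X where "X = C * \<rho>^(Suc n)"
  have "0 \<le> X" unfolding X_def using \<rho> C by simp
  have partial: "norm (e (n + m) - e n) \<le> X * (1 - \<rho>^m) / (1 - \<rho>)" for m
  proof (induction m)
    case (Suc m)
    have "norm (e (n + Suc m) - e (n + m)) \<le> X * \<rho>^m"
      using step[of "n + m"] unfolding X_def by (simp add: power_add mult_ac)
    from norm_diff_triangle_le[OF this Suc]
    have "norm (e (n + Suc m) - e n) \<le> X * \<rho>^m + X * (1 - \<rho>^m) / (1 - \<rho>)" .
    also have "\<dots> = X * (1 - \<rho>^(Suc m)) / (1 - \<rho>)" using \<rho> by (simp add: field_simps)
    finally show ?case .
  qed simp
  have tail: "norm (e (n + m) - e n) \<le> X / (1 - \<rho>)" for m
  proof -
    have "X * (1 - \<rho>^m) / (1 - \<rho>) \<le> X / (1 - \<rho>)"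
      using \<rho> \<open>0 \<le> X\<close> by (intro divide_right_mono) (simp_all add: mult_left_le)
    then show ?thesis using partial[of m] by linarith
  qed
  show ?thesis unfolding X_def[symmetric]
  proof (rule field_le_epsilon)
    fix \<epsilon> :: real assume "0 < \<epsilon>"
    then obtain J where "\<forall>j\<ge>J. norm (e j - z) < \<epsilon>" using LIMSEQ_D[OF lim] by blast
    then have "norm (z - e (n + J)) \<le> \<epsilon>" by (simp add: norm_minus_commute less_imp_le)
    from norm_diff_triangle_le[OF this tail[of J]] show "norm (z - e n) \<le> X / (1 - \<rho>) + \<epsilon>"
      by simp
  qed
qed

lemma sqrt_bound_from_weighted_sq:
  fixes x Q b :: real
  assumes "0 \<le> x" "0 < b" "b^m * x^2 \<le> Q"
  shows "x \<le> sqrt Q * (1 / sqrt b)^m"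
proof -
  have "sqrt b ^ m * x = sqrt (b^m * x^2)"
    using assms by (simp add: real_sqrt_mult real_sqrt_power)
  also have "\<dots> \<le> sqrt Q" using assms by simp
  finally show ?thesis using assms by (simp add: power_one_over field_simps)
qed

lemma dyadic_mean_Suc_dist_le:
  fixes g :: "real \<Rightarrow> complex"
  assumes "1 < r" "\<And>n. r^n * dyadic_variation g a l n \<le> Q" "k < 2^n - 1"
  shows "cmod (dyadic_mean g a l n k - dyadic_mean g a l n (Suc k)) \<le> sqrt Q * (1 / sqrt r)^n"
proof (rule sqrt_bound_from_weighted_sq)
  have "(cmod (dyadic_mean g a l n k - dyadic_mean g a l n (Suc k)))\<^sup>2 \<le> dyadic_variation g a l n"
    unfolding dyadic_variation_def using assms(3)
    by (intro member_le_sum[where f="\<lambda>k. (cmod (dyadic_mean g a l n k - dyadic_mean g a l n (Suc k)))\<^sup>2"])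
      auto
  then have "r^n * (cmod (dyadic_mean g a l n k - dyadic_mean g a l n (Suc k)))\<^sup>2
      \<le> r^n * dyadic_variation g a l n"
    using assms(1) by (intro mult_left_mono) auto
  then show "r^n * (cmod (dyadic_mean g a l n k - dyadic_mean g a l n (Suc k)))\<^sup>2 \<le> Q"
    using assms(2)[of n] by linarith
qed (use assms(1) in auto)

text \<open>Each dyadic mean is the average of its two children, so the end means move by half a
  neighbour difference per level; these differences decay geometrically by the energy bound.\<close>
lemma dyadic_mean_first_dist:
  fixes g :: "real \<Rightarrow> complex"
  assumes cg: "continuous_on UNIV g" and l: "0 < l" and r: "1 < r" and Q: "0 \<le> Q"
    and bound: "\<And>n. r^n * dyadic_variation g a l n \<le> Q"
  shows "cmod (g a - dyadic_mean g a l n 0) \<le> sqrt Q / 2 * (1 / sqrt r)^(Suc n) / (1 - 1 / sqrt r)"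
proof (rule dist_limit_le_geometric_tail)
  show "0 \<le> 1 / sqrt r" "1 / sqrt r < 1" "0 \<le> sqrt Q / 2" using r Q by auto
  fix j
  have half: "dyadic_mean g a l (Suc j) 0 - dyadic_mean g a l j 0
      = (dyadic_mean g a l (Suc j) 0 - dyadic_mean g a l (Suc j) 1) / 2"
    using dyadic_mean_bisect[OF cg l, of a j 0] by (simp add: field_simps)
  have "0 < 2^Suc j - (1::nat)" using one_le_power[of "2::nat" j] power_Suc[of "2::nat" j] by linarith
  then have "cmod (dyadic_mean g a l (Suc j) 0 - dyadic_mean g a l (Suc j) 1) / 2
      \<le> sqrt Q * (1 / sqrt r)^(Suc j) / 2"
    using dyadic_mean_Suc_dist_le[OF r bound, of 0 "Suc j"] by (intro divide_right_mono) auto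
  then show "cmod (dyadic_mean g a l (Suc j) 0 - dyadic_mean g a l j 0)
      \<le> sqrt Q / 2 * (1 / sqrt r)^(Suc j)"
    unfolding half norm_divide by simp
next
  show "(\<lambda>j. dyadic_mean g a l j 0) \<longlonglongrightarrow> g a"
    unfolding dyadic_mean_def
    by (rule interval_mean_shrinking_tendsto[OF cg dyadic_pt_less[OF l]])
      (use l in \<open>simp_all add: dyadic_pt_def LIMSEQ_divide_realpow_zero\<close>)
qed

lemma dyadic_mean_last_dist:
  fixes g :: "real \<Rightarrow> complex"
  assumes cg: "continuous_on UNIV g" and l: "0 < l" and r: "1 < r" and Q: "0 \<le> Q"
    and bound: "\<And>n. r^n * dyadic_variation g a l n \<le> Q"
  shows "cmod (g (a + l) - dyadic_mean g a l n (2^n - 1))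
    \<le> sqrt Q / 2 * (1 / sqrt r)^(Suc n) / (1 - 1 / sqrt r)"
proof (rule dist_limit_le_geometric_tail)
  show "0 \<le> 1 / sqrt r" "1 / sqrt r < 1" "0 \<le> sqrt Q / 2" using r Q by auto
  fix j
  have idx: "2 * (2^j - 1) = 2^Suc j - (2::nat)" "Suc (2^Suc j - 2) = 2^Suc j - (1::nat)"
    "2^Suc j - 2 < 2^Suc j - (1::nat)"
    using one_le_power[of "2::nat" j] power_Suc[of "2::nat" j] by linarith+
  have half: "dyadic_mean g a l (Suc j) (2^Suc j - 1) - dyadic_mean g a l j (2^j - 1)
      = (dyadic_mean g a l (Suc j) (2^Suc j - 1) - dyadic_mean g a l (Suc j) (2^Suc j - 2)) / 2"
    using dyadic_mean_bisect[OF cg l, of a j "2^j - 1"] idx by (simp add: field_simps)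
  have "cmod (dyadic_mean g a l (Suc j) (2^Suc j - 1) - dyadic_mean g a l (Suc j) (2^Suc j - 2)) / 2
      \<le> sqrt Q * (1 / sqrt r)^(Suc j) / 2"
    using dyadic_mean_Suc_dist_le[OF r bound idx(3)] idx(2)
    by (intro divide_right_mono) (simp_all add: norm_minus_commute)
  then show "cmod (dyadic_mean g a l (Suc j) (2^Suc j - 1) - dyadic_mean g a l j (2^j - 1))
      \<le> sqrt Q / 2 * (1 / sqrt r)^(Suc j)"
    unfolding half norm_divide by simp
next
  have "dyadic_pt a l j (2^j - 1) = a + l - l / 2^j" for j
    using dyadic_pt_Suc_diff[of a l j "2^j - 1"] by simp
  then show "(\<lambda>j. dyadic_mean g a l j (2^j - 1)) \<longlonglongrightarrow> g (a + l)"
    unfolding dyadic_mean_def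
    by (intro interval_mean_shrinking_tendsto[OF cg dyadic_pt_less[OF l]])
      (use l in \<open>simp_all add: LIMSEQ_divide_realpow_zero\<close>)
qed

lemma dyadic_mean_span_sq_le:
  "(cmod (dyadic_mean g a l n (2^n - 1) - dyadic_mean g a l n 0))\<^sup>2 \<le> 2^n * dyadic_variation g a l n"
proof -
  have "(cmod (dyadic_mean g a l n (2^n - 1) - dyadic_mean g a l n 0))\<^sup>2
      \<le> real (2^n - 1) * dyadic_variation g a l n"
    using norm_telescope_sq_le[of "dyadic_mean g a l n" "2^n - 1"]
    unfolding dyadic_variation_def by (simp add: norm_minus_commute)
  also have "\<dots> \<le> 2^n * dyadic_variation g a l n"
    unfolding dyadic_variation_def by (intro mult_right_mono sum_nonneg) auto
  finally show ?thesis .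
qed

lemma dyadic_spread_ge_jump:
  fixes g :: "real \<Rightarrow> complex"
  assumes cg: "continuous_on UNIV g" and l: "0 < l" and r: "1 < r" and Q: "0 \<le> Q"
    and bound: "\<And>n. r^n * dyadic_variation g a l n \<le> Q"
  shows "cmod (g (a + l) - g a)
    \<le> sqrt (2^n * dyadic_variation g a l n) + sqrt Q * (1 / sqrt r)^(Suc n) / (1 - 1 / sqrt r)"
proof -
  have "cmod (g (a + l) - g a) \<le> cmod (g (a + l) - dyadic_mean g a l n (2^n - 1))
      + cmod (dyadic_mean g a l n (2^n - 1) - dyadic_mean g a l n 0) + cmod (g a - dyadic_mean g a l n 0)"
    using norm_triangle_ineq4[of "g (a + l) - dyadic_mean g a l n 0" "g a - dyadic_mean g a l n 0"]
      norm_triangle_ineq[of "g (a + l) - dyadic_mean g a l n (2^n - 1)"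
        "dyadic_mean g a l n (2^n - 1) - dyadic_mean g a l n 0"]
    by simp
  moreover have "cmod (dyadic_mean g a l n (2^n - 1) - dyadic_mean g a l n 0)
      \<le> sqrt (2^n * dyadic_variation g a l n)"
    using dyadic_mean_span_sq_le by (intro real_le_rsqrt)
  ultimately show ?thesis
    using dyadic_mean_first_dist[OF cg l r Q bound, of n] dyadic_mean_last_dist[OF cg l r Q bound, of n]
    by argo
qed

lemma exists_level_above_inverse_gap:
  fixes s :: real
  assumes "0 < s" "s < 1"
  shows "\<exists>n1. 1 / (1 - s) \<le> (2 powr s)^n1 \<and> exp (-1) / 2 \<le> (2 powr (s - 1))^n1"
proof -
  define L where "L = ln (1 / (1 - s))"
  have "0 \<le> L" unfolding L_def using assms by simp
  have "(1 - s) * L \<le> s"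
    using ln_le_minus_one[of "1 / (1 - s)"] assms unfolding L_def by (simp add: field_simps)
  define n1 where "n1 = nat \<lceil>L / (s * ln 2)\<rceil>"
  have "L / (s * ln 2) \<le> real n1" unfolding n1_def by linarith
  then have n1_ge: "L \<le> real n1 * (s * ln 2)" using assms by (simp add: field_simps)
  have "real n1 < L / (s * ln 2) + 1"
    unfolding n1_def using \<open>0 \<le> L\<close> assms by (simp add: divide_nonneg_pos) linarith
  then have n1_lt: "real n1 * (s * ln 2) < L + s * ln 2" using assms by (simp add: field_simps)
  have pow: "(2 powr x)^n1 = exp (real n1 * (x * ln 2))" for x :: real
    by (simp add: powr_def exp_of_nat_mult[symmetric] mult_ac)
  have "1 / (1 - s) = exp L" unfolding L_def using assms by simp
  also have "\<dots> \<le> (2 powr s)^n1" unfolding pow using n1_ge by simp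
  finally have first: "1 / (1 - s) \<le> (2 powr s)^n1" .
  have "real n1 * ((1 - s) * ln 2) = (1 - s) / s * (real n1 * (s * ln 2))"
    using assms by (simp add: field_simps)
  also have "\<dots> \<le> (1 - s) / s * (L + s * ln 2)"
    using n1_lt assms by (intro mult_left_mono) auto
  also have "\<dots> = (1 - s) * L / s + (1 - s) * ln 2" using assms by (simp add: field_simps)
  also have "\<dots> \<le> 1 + ln 2"
    using \<open>(1 - s) * L \<le> s\<close> assms by (intro add_mono) (simp_all add: divide_le_eq)
  finally have "-1 - ln 2 \<le> real n1 * ((s - 1) * ln 2)" by (simp add: algebra_simps)
  then have "exp (-1 - ln 2) \<le> exp (real n1 * ((s - 1) * ln 2))" by simp
  moreover have "exp (-1 - ln (2::real)) = exp (-1) / 2" by (simp add: exp_diff)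
  ultimately have "exp (-1) / 2 \<le> (2 powr (s - 1))^n1" unfolding pow by simp
  with first show ?thesis by blast
qed

lemma exists_window_above_inverse_gap:
  fixes s :: real
  assumes "0 < s" "s < 1"
  shows "\<exists>M. 1 \<le> real M * (1 - s) \<and> 1 / 4 \<le> (2 powr (s - 1))^M"
proof -
  define M where "M = nat \<lceil>1 / (1 - s)\<rceil>"
  have "0 < 1 / (1 - s)" using assms by simp
  then have "-1 < 1 / (1 - s)" by linarith
  then have "0 \<le> \<lceil>1 / (1 - s)\<rceil>" by simp
  then have "real M = real_of_int \<lceil>1 / (1 - s)\<rceil>" unfolding M_def by simp
  then have "1 / (1 - s) \<le> real M" "real M \<le> 1 / (1 - s) + 1"
    using of_int_ceiling_le_add_one[of "1 / (1 - s)"] by linarith+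
  then have M: "1 \<le> real M * (1 - s)" "real M * (1 - s) \<le> 2"
    using assms by (simp_all add: field_simps)
  have "(2 powr (s - 1))^M = 2 powr (- (real M * (1 - s)))"
    by (simp add: powr_power algebra_simps)
  also have "\<dots> \<ge> 2 powr (-2)" using M by (intro powr_mono) auto
  finally show ?thesis using M by (auto simp: powr_minus powr_numeral)
qed

text \<open>The first bound keeps the tail error of the dyadic means below \<open>1/2\<close>; the second is beaten by the
  variations at the levels where the means are forced apart.\<close>
definition energy_const :: "real \<Rightarrow> real" where
  "energy_const s0 = min ((2 powr (s0 / 2) - 1)\<^sup>2 / 64) (exp (-1) / 512)"

lemma energy_const_pos: "0 < s0 \<Longrightarrow> 0 < energy_const s0"
  unfolding energy_const_def by simp

lemma dyadic_tail_error_le_half: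
  fixes s s0 Q :: real
  defines "\<rho> \<equiv> 1 / sqrt (2 powr s)"
  assumes s: "0 < s0" "s0 \<le> s" "s < 1" and Q: "0 \<le> Q" "Q < 16 * energy_const s0 / (1 - s)"
    and n1: "1 / (1 - s) \<le> (2 powr s)^n1" and "n1 \<le> n"
  shows "sqrt Q * \<rho>^(Suc n) / (1 - \<rho>) \<le> 1 / 2"
proof -
  define \<beta> where "\<beta> = 2 powr (s0 / 2)"
  have sqrt_r: "sqrt (2 powr s) = 2 powr (s / 2)" by (simp add: powr_half_sqrt[symmetric] powr_powr)
  have \<beta>: "1 < \<beta>" "\<beta> \<le> 2 powr (s / 2)" unfolding \<beta>_def using s by auto
  have \<rho>: "0 < \<rho>" "\<rho> < 1" unfolding \<rho>_def sqrt_r using s by auto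
  have "\<rho>^n \<le> \<rho>^n1" using \<rho> \<open>n1 \<le> n\<close> by (intro power_decreasing) auto
  also have "\<rho>^n1 = 1 / sqrt ((2 powr s)^n1)" unfolding \<rho>_def by (simp add: power_one_over real_sqrt_power)
  also have "\<dots> \<le> 1 / sqrt (1 / (1 - s))" using n1 s by (intro divide_left_mono) auto
  also have "\<dots> = sqrt (1 - s)" using s by (simp add: real_sqrt_divide)
  finally have \<rho>_n: "\<rho>^n \<le> sqrt (1 - s)" .
  have "sqrt Q \<le> sqrt (16 * energy_const s0 / (1 - s))" using Q by simp
  also have "\<dots> = 4 * sqrt (energy_const s0) / sqrt (1 - s)"
    using s by (simp add: real_sqrt_mult real_sqrt_divide)
  also have "\<dots> \<le> 4 * ((\<beta> - 1) / 8) / sqrt (1 - s)"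
  proof -
    have "energy_const s0 \<le> ((\<beta> - 1) / 8)\<^sup>2" unfolding energy_const_def \<beta>_def by (simp add: power_divide)
    then have "sqrt (energy_const s0) \<le> (\<beta> - 1) / 8"
      using \<beta> real_sqrt_le_mono by fastforce
    then show ?thesis using s by (intro divide_right_mono) auto
  qed
  finally have sqrt_Q: "sqrt Q \<le> 4 * ((\<beta> - 1) / 8) / sqrt (1 - s)" .
  have "\<rho> / (1 - \<rho>) = 1 / (2 powr (s / 2) - 1)"
    unfolding \<rho>_def sqrt_r using \<beta> by (simp add: field_simps)
  also have "\<dots> \<le> 1 / (\<beta> - 1)" using \<beta> by (intro divide_left_mono) auto
  finally have "\<rho> / (1 - \<rho>) \<le> 1 / (\<beta> - 1)" .
  have "sqrt Q * \<rho>^(Suc n) / (1 - \<rho>) = sqrt Q * \<rho>^n * (\<rho> / (1 - \<rho>))" by simp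
  also have "\<dots> \<le> 4 * ((\<beta> - 1) / 8) / sqrt (1 - s) * sqrt (1 - s) * (1 / (\<beta> - 1))"
    using sqrt_Q \<rho>_n \<open>\<rho> / (1 - \<rho>) \<le> _\<close> \<rho> Q \<beta> s by (intro mult_mono) auto
  also have "\<dots> = 1 / 2" using s \<beta> by simp
  finally show ?thesis .
qed

lemma dyadic_gap_forces_energy:
  fixes s s0 Q :: real and A :: "nat \<Rightarrow> real"
  defines "\<rho> \<equiv> 1 / sqrt (2 powr s)"
  assumes s: "0 < s0" "s0 \<le> s" "s < 1" and A: "\<And>n. 0 \<le> A n" and Q: "0 \<le> Q"
    and sum: "\<And>N. (\<Sum>n\<le>N. (2 powr s)^n * A n) \<le> Q"
    and gap: "\<And>n. 1 \<le> sqrt (2^n * A n) + sqrt Q * \<rho>^(Suc n) / (1 - \<rho>)"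
  shows "16 * energy_const s0 / (1 - s) \<le> Q"
proof (rule ccontr)
  assume "\<not> ?thesis"
  then have Q_small: "Q < 16 * energy_const s0 / (1 - s)" by simp
  define q where "q = 2 powr (s - 1)"
  have q: "2 powr s = 2 * q" "0 < q" "q \<le> 1"
    unfolding q_def using s powr_mono[of "s - 1" 0 2] by (simp_all add: powr_diff)
  obtain n1 where n1: "1 / (1 - s) \<le> (2 powr s)^n1" "exp (-1) / 2 \<le> q^n1"
    using exists_level_above_inverse_gap[of s] s unfolding q_def by auto
  obtain M where M: "1 \<le> real M * (1 - s)" "1 / 4 \<le> q^M"
    using exists_window_above_inverse_gap[of s] s unfolding q_def by auto
  have level: "q^n / 4 \<le> (2 powr s)^n * A n" if "n1 \<le> n" for n
  proof -
    have "1 / 2 \<le> sqrt (2^n * A n)"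
      using gap[of n] dyadic_tail_error_le_half[OF s Q Q_small n1(1) that] unfolding \<rho>_def by linarith
    then have "(1 / 2)\<^sup>2 \<le> (sqrt (2^n * A n))\<^sup>2" by (intro power_mono) auto
    then have "1 / 4 \<le> 2^n * A n" using A[of n] by (simp add: power2_eq_square)
    then have "q^n * (1 / 4) \<le> q^n * (2^n * A n)" using A[of n] q by (intro mult_left_mono) auto
    then show ?thesis unfolding q(1) by (simp add: power_mult_distrib mult_ac)
  qed
  have "(\<Sum>n\<in>{n1..<n1 + M}. q^(n1 + M) / 4) \<le> (\<Sum>n\<in>{n1..<n1 + M}. (2 powr s)^n * A n)"
  proof (intro sum_mono)
    fix n assume "n \<in> {n1..<n1 + M}"
    then have "q^(n1 + M) \<le> q^n" using q by (intro power_decreasing) auto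
    then show "q^(n1 + M) / 4 \<le> (2 powr s)^n * A n" using level[of n] \<open>n \<in> _\<close> by simp
  qed
  also have "\<dots> \<le> (\<Sum>n\<le>n1 + M. (2 powr s)^n * A n)"
    by (rule sum_mono2) (use A in auto)
  also have "\<dots> \<le> Q" by (rule sum)
  finally have "real M * (q^(n1 + M) / 4) \<le> Q" by simp
  moreover have "1 / (1 - s) * (exp (-1) / 8 / 4) \<le> real M * (q^(n1 + M) / 4)"
  proof -
    have "exp (-1) / 2 * (1 / 4) \<le> q^n1 * q^M" using n1(2) M(2) q by (intro mult_mono) auto
    then have "exp (-1) / 8 \<le> q^(n1 + M)" by (simp add: power_add)
    moreover have "1 / (1 - s) \<le> real M" using M(1) s by (simp add: field_simps)
    ultimately show ?thesis using s by (intro mult_mono divide_right_mono) auto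
  qed
  moreover have "16 * energy_const s0 / (1 - s) \<le> 1 / (1 - s) * (exp (-1) / 8 / 4)"
  proof -
    have "16 * energy_const s0 \<le> exp (-1) / 8 / 4" unfolding energy_const_def by simp
    then have "16 * energy_const s0 / (1 - s) \<le> exp (-1) / 8 / 4 / (1 - s)"
      using s by (intro divide_right_mono) auto
    then show ?thesis by (simp add: mult.commute)
  qed
  ultimately show False using Q_small by linarith
qed

lemma frac_energy_across_jump:
  fixes g :: "real \<Rightarrow> complex"
  assumes cg: "continuous_on UNIV g" and l: "0 < l" and s: "0 < s0" "s0 \<le> s" "s < 1"
    and jump: "1 \<le> cmod (g (a + l) - g a)"
  shows "ennreal (energy_const s0 / (1 - s) * l powr (-s)) \<le> frac_energy g s {a..<a + l}"
proof (cases "frac_energy g s {a..<a + l}" rule: ennreal_cases)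
  case (real E)
  define A where "A = dyadic_variation g a l"
  define Q where "Q = 16 * l powr s * E"
  define \<rho> where "\<rho> = 1 / sqrt (2 powr s)"
  have A_nonneg: "0 \<le> A n" for n unfolding A_def dyadic_variation_def by (simp add: sum_nonneg)
  have "0 \<le> Q" unfolding Q_def using real by simp
  have sum: "(\<Sum>n\<le>N. (2 powr s)^n * A n) \<le> Q" for N
  proof -
    have "ennreal (l powr (-s) / 16 * (\<Sum>n\<le>N. (2^n) powr s * A n)) \<le> ennreal E"
      using frac_energy_ge_dyadic_variation[OF cg l, where s=s and N=N and a=a] s real unfolding A_def by simp
    then have "l powr (-s) / 16 * (\<Sum>n\<le>N. (2^n) powr s * A n) \<le> E"
      using real by (simp add: ennreal_le_iff)
    moreover have "((2::real)^n) powr s = (2 powr s)^n" for n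
      by (simp add: powr_def ln_realpow exp_of_nat_mult[symmetric] mult_ac)
    ultimately show ?thesis using l unfolding Q_def by (simp add: powr_minus field_simps)
  qed
  have bound: "(2 powr s)^n * A n \<le> Q" for n
    using member_le_sum[of n "{..n}" "\<lambda>n. (2 powr s)^n * A n"] A_nonneg sum[of n] by simp
  have "1 < 2 powr s" using s by simp
  from jump dyadic_spread_ge_jump[OF cg l this \<open>0 \<le> Q\<close> bound[unfolded A_def]]
  have "1 \<le> sqrt (2^n * A n) + sqrt Q * \<rho>^(Suc n) / (1 - \<rho>)" for n
    unfolding A_def \<rho>_def by (rule order_trans)
  then have "16 * energy_const s0 / (1 - s) \<le> Q"
    using dyadic_gap_forces_energy[OF s A_nonneg \<open>0 \<le> Q\<close> sum] unfolding \<rho>_def by blast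
  then have "energy_const s0 / (1 - s) * l powr (-s) \<le> l powr s * E * l powr (-s)"
    unfolding Q_def by (intro mult_right_mono) auto
  also have "\<dots> = E" using l by (simp add: powr_minus)
  finally have "energy_const s0 / (1 - s) * l powr (-s) \<le> E" .
  then show ?thesis using real by (simp add: ennreal_leI)
qed simp

section \<open>Winding along a segment\<close>

lemma increasing_level_crossings:
  fixes \<psi> :: "real \<Rightarrow> real"
  assumes c: "continuous_on {0..1} \<psi>" and h: "0 < h" and D: "\<psi> 0 + real D * h \<le> \<psi> 1"
  shows "\<exists>\<tau>. \<tau> 0 = 0 \<and> (\<forall>k\<le>D. \<tau> k \<in> {0..1} \<and> \<psi> (\<tau> k) = \<psi> 0 + real k * h) \<and>
    (\<forall>k<D. \<tau> k < \<tau> (Suc k))"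
proof -
  have "\<exists>\<tau>. \<tau> 0 = 0 \<and> (\<forall>k\<le>m. \<tau> k \<in> {0..1} \<and> \<psi> (\<tau> k) = \<psi> 0 + real k * h) \<and>
    (\<forall>k<m. \<tau> k < \<tau> (Suc k))" if "m \<le> D" for m
    using that
  proof (induction m)
    case 0
    show ?case by (rule exI[of _ "\<lambda>_. 0"]) simp
  next
    case (Suc m)
    then obtain \<tau> where \<tau>: "\<tau> 0 = 0" "\<forall>k\<le>m. \<tau> k \<in> {0..1} \<and> \<psi> (\<tau> k) = \<psi> 0 + real k * h"
      "\<forall>k<m. \<tau> k < \<tau> (Suc k)" by auto
    have \<tau>_m: "\<tau> m \<in> {0..1}" "\<psi> (\<tau> m) = \<psi> 0 + real m * h" using \<tau>(2) by auto
    have "real (Suc m) * h \<le> real D * h" using Suc.prems h by (intro mult_right_mono) auto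
    then have below_1: "\<psi> 0 + real (Suc m) * h \<le> \<psi> 1" using D by linarith
    have above_\<tau>: "\<psi> (\<tau> m) \<le> \<psi> 0 + real (Suc m) * h" using \<tau>_m h by (simp add: algebra_simps)
    obtain x where x: "\<tau> m \<le> x" "x \<le> 1" "\<psi> x = \<psi> 0 + real (Suc m) * h"
      using IVT'[OF above_\<tau> below_1 _ continuous_on_subset[OF c]] \<tau>_m by auto
    have "x \<noteq> \<tau> m" using x(3) \<tau>_m h by (auto simp: algebra_simps)
    then have "\<tau> m < x" using x(1) by simp
    then show ?case
      using \<tau> \<tau>_m x by (intro exI[of _ "\<tau>(Suc m := x)"]) (auto simp: le_Suc_eq less_Suc_eq)
  qed
  then show ?thesis by blast
qed

lemma sum_indicator_consecutive_squares_le: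
  fixes \<tau> :: "nat \<Rightarrow> real"
  assumes mono: "\<And>k. k < D \<Longrightarrow> \<tau> k < \<tau> (Suc k)" and range: "\<And>k. k \<le> D \<Longrightarrow> \<tau> k \<in> {a..b}"
  shows "(\<Sum>k<D. indicator ({\<tau> k..<\<tau> (Suc k)} \<times> {\<tau> k..<\<tau> (Suc k)}) p)
    \<le> (indicator ({a..b} \<times> {a..b}) p :: real)"
proof -
  define I where "I k = {\<tau> k..<\<tau> (Suc k)}" for k
  have \<tau>_mono: "\<tau> k \<le> \<tau> k'" if "k \<le> k'" "k' \<le> D" for k k'
    using that
  proof (induction k' rule: dec_induct)
    case (step k')
    then show ?case using mono[of k'] by simp
  qed simp
  have "(\<Sum>k<D. indicator (I k \<times> I k) p) \<le> (indicator ({a..b} \<times> {a..b}) p :: real)"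
  proof (rule sum_le_if_at_most_one_nonzero)
    fix k assume "k \<in> {..<D}"
    then have "I k \<subseteq> {a..b}" using range[of k] range[of "Suc k"] unfolding I_def by auto
    then show "0 \<le> (indicator (I k \<times> I k) p :: real) \<and>
       (indicator (I k \<times> I k) p :: real) \<le> indicator ({a..b} \<times> {a..b}) p"
      by (auto simp: indicator_def)
  next
    fix k k' assume kk: "k \<in> {..<D}" "k' \<in> {..<D}"
      "(indicator (I k \<times> I k) p :: real) \<noteq> 0" "(indicator (I k' \<times> I k') p :: real) \<noteq> 0"
    then have "fst p \<in> I k" "fst p \<in> I k'" by (auto simp: indicator_def split: if_splits)
    moreover have False if "Suc k1 \<le> k2" "k2 < D" "fst p \<in> I k1" "fst p \<in> I k2" for k1 k2
      using that \<tau>_mono[of "Suc k1" k2] unfolding I_def by auto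
    ultimately show "k = k'"
      using kk(1,2) by (cases "k < k'") (auto simp: Suc_le_eq dest: not_less_iff_gr_or_eq[THEN iffD1])
  qed auto
  then show ?thesis unfolding I_def .
qed

lemma frac_energy_sum_intervals_le:
  fixes g :: "real \<Rightarrow> complex"
  assumes cg: "continuous_on UNIV g" and mono: "\<And>k. k < D \<Longrightarrow> \<tau> k < \<tau> (Suc k)"
    and range: "\<And>k. k \<le> D \<Longrightarrow> \<tau> k \<in> {a..b}"
  shows "(\<Sum>k<D. frac_energy g s {\<tau> k..<\<tau> (Suc k)}) \<le> frac_energy g s {a..b}"
proof -
  have [measurable]: "g \<in> borel_measurable borel"
    using cg by (simp add: borel_measurable_continuous_onI)
  define F where "F p = ennreal ((cmod (g (fst p) - g (snd p)))\<^sup>2 / \<bar>fst p - snd p\<bar> powr (2 + s))"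
    for p :: "real \<times> real"
  define I where "I k = {\<tau> k..<\<tau> (Suc k)}" for k
  have [measurable]: "F \<in> borel_measurable (lborel \<Otimes>\<^sub>M lborel)" unfolding F_def by measurable
  have "(\<Sum>k<D. frac_energy g s (I k)) = (\<integral>\<^sup>+p. (\<Sum>k<D. indicator (I k \<times> I k) p * F p) \<partial>(lborel \<Otimes>\<^sub>M lborel))"
    unfolding frac_energy_def F_def[symmetric] I_def by (rule nn_integral_sum[symmetric]) measurable
  also have "\<dots> \<le> frac_energy g s {a..b}"
    unfolding frac_energy_def F_def[symmetric]
  proof (intro nn_integral_mono)
    fix p
    have "ennreal (\<Sum>k<D. indicator (I k \<times> I k) p) = (\<Sum>k<D. ennreal (indicator (I k \<times> I k) p))"
      by (rule sum_ennreal[symmetric]) simp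
    then have "(\<Sum>k<D. indicator (I k \<times> I k) p * F p) = ennreal (\<Sum>k<D. indicator (I k \<times> I k) p) * F p"
      by (simp add: sum_distrib_right ennreal_indicator)
    also have "\<dots> \<le> ennreal (indicator ({a..b} \<times> {a..b}) p) * F p"
      unfolding I_def
      by (intro mult_right_mono ennreal_leI sum_indicator_consecutive_squares_le mono range) simp_all
    finally show "(\<Sum>k<D. indicator (I k \<times> I k) p * F p) \<le> indicator ({a..b} \<times> {a..b}) p * F p"
      by (simp add: ennreal_indicator)
  qed
  finally show ?thesis unfolding I_def .
qed

lemma norm_exp_quarter_turn_minus_one:
  assumes "cos d = 0"
  shows "1 \<le> cmod (exp (\<i> * complex_of_real d) - 1)"
proof -
  have "(cmod (exp (\<i> * complex_of_real d) - 1))\<^sup>2 = (cos d - 1)\<^sup>2 + (sin d)\<^sup>2"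
    by (simp add: cmod_power2 exp_Euler cos_of_real sin_of_real)
  also have "\<dots> = 2" using assms sin_cos_squared_add[of d] by (simp add: power2_eq_square algebra_simps)
  finally show ?thesis by (smt (verit) one_le_power power2_eq_square norm_ge_zero mult_le_one)
qed

text \<open>Clamping the parameter to \<open>[0,1]\<close> makes the pullback continuous on all of \<open>\<real>\<close>.\<close>
definition segment_pullback :: "(complex \<Rightarrow> complex) \<Rightarrow> complex \<Rightarrow> complex \<Rightarrow> real \<Rightarrow> complex" where
  "segment_pullback u a b x = u (a + complex_of_real (max 0 (min 1 x)) * (b - a))"

lemma segment_pullback_eq_linepath:
  "x \<in> {0..1} \<Longrightarrow> segment_pullback u a b x = (u \<circ> linepath a b) x"
  unfolding segment_pullback_def linepath_def by (simp add: scaleR_conv_of_real algebra_simps)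

lemma continuous_on_segment_pullback:
  assumes "continuous_on (closed_segment a b) u"
  shows "continuous_on UNIV (segment_pullback u a b)"
proof -
  have "a + complex_of_real (max 0 (min 1 x)) * (b - a) = linepath a b (max 0 (min 1 x))" for x
    unfolding linepath_def by (simp add: scaleR_conv_of_real algebra_simps)
  then have "(\<lambda>x::real. a + complex_of_real (max 0 (min 1 x)) * (b - a)) ` UNIV \<subseteq> closed_segment a b"
    using linepath_image_01[of a b] by auto
  moreover have "continuous_on UNIV (\<lambda>x::real. a + complex_of_real (max 0 (min 1 x)) * (b - a))"
    by (intro continuous_intros)
  ultimately show ?thesis
    unfolding segment_pullback_def by (intro continuous_on_compose2[OF assms])
qed

lemma seg_seminorm_sq_eq_frac_energy:
  assumes cu: "continuous_on (closed_segment a b) u" and "a \<noteq> b"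
  shows "seg_seminorm_sq u a b ((1 + s) / 2)
    = ennreal (cmod (b - a) powr (-s)) * frac_energy (segment_pullback u a b) s {0..1}"
proof -
  define L where "L = cmod (b - a)"
  define g where "g = segment_pullback u a b"
  have "0 < L" unfolding L_def using \<open>a \<noteq> b\<close> by simp
  have [measurable]: "g \<in> borel_measurable borel"
    unfolding g_def by (intro borel_measurable_continuous_onI continuous_on_segment_pullback cu)
  have "indicator ({0..1} \<times> {0..1}) p *
        ennreal ((cmod (u (a + of_real (fst p) * (b - a)) - u (a + of_real (snd p) * (b - a))))\<^sup>2
                 / (cmod (of_real (fst p - snd p) * (b - a))) powr (1 + 2 * ((1 + s) / 2))
                 * (cmod (b - a))\<^sup>2)
      = ennreal (L powr (-s)) * (indicator ({0..1} \<times> {0..1}) p *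
         ennreal ((cmod (g (fst p) - g (snd p)))\<^sup>2 / \<bar>fst p - snd p\<bar> powr (2 + s)))" for p
  proof (cases "p \<in> {0..1} \<times> {0..1}")
    case True
    obtain x y where p: "p = (x, y)" by (cases p)
    have gx: "u (a + of_real x * (b - a)) = g x" "u (a + of_real y * (b - a)) = g y"
      using True unfolding p g_def segment_pullback_def by auto
    have exponent: "1 + 2 * ((1 + s) / 2) = 2 + s" by simp
    have dist: "cmod (of_real (x - y) * (b - a)) = \<bar>x - y\<bar> * L" unfolding L_def norm_mult norm_of_real ..
    have split: "(\<bar>x - y\<bar> * L) powr (2 + s) = \<bar>x - y\<bar> powr (2 + s) * (L\<^sup>2 * L powr s)"
      using \<open>0 < L\<close> by (simp add: powr_mult powr_add powr_numeral)
    have cancel: "X / (A * (L\<^sup>2 * L powr s)) * L\<^sup>2 = L powr (-s) * (X / A)" for X A :: real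
      using \<open>0 < L\<close> by (simp add: powr_minus field_simps)
    have "(cmod (u (a + of_real (fst p) * (b - a)) - u (a + of_real (snd p) * (b - a))))\<^sup>2
        / (cmod (of_real (fst p - snd p) * (b - a))) powr (1 + 2 * ((1 + s) / 2)) * (cmod (b - a))\<^sup>2
      = L powr (-s) * ((cmod (g (fst p) - g (snd p)))\<^sup>2 / \<bar>fst p - snd p\<bar> powr (2 + s))"
      unfolding p fst_conv snd_conv gx exponent dist L_def[symmetric] split cancel ..
    moreover have "ennreal (L powr (-s) * ((cmod (g (fst p) - g (snd p)))\<^sup>2 / \<bar>fst p - snd p\<bar> powr (2 + s)))
        = ennreal (L powr (-s)) * ennreal ((cmod (g (fst p) - g (snd p)))\<^sup>2 / \<bar>fst p - snd p\<bar> powr (2 + s))"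
      by (rule ennreal_mult) auto
    ultimately show ?thesis using True by simp
  qed simp
  then show ?thesis
    unfolding seg_seminorm_sq_def frac_energy_def g_def[symmetric] L_def[symmetric]
    by (simp only:) (rule nn_integral_cmult, measurable)
qed

lemma segment_pullback_lift:
  assumes cu: "continuous_on (closed_segment a b) u" and us: "u ` closed_segment a b \<subseteq> sphere 0 1"
  obtains \<phi> where "continuous_on {0..1} \<phi>"
    and "\<And>x. x \<in> {0..1} \<Longrightarrow> segment_pullback u a b x = exp (\<i> * complex_of_real (\<phi> x))"
    and "\<phi> 1 - \<phi> 0 = 2 * pi * Re (winding_number (u \<circ> linepath a b) 0)"
proof -
  define g where "g = u \<circ> linepath a b"
  have cg: "continuous_on {0..1} g" unfolding g_def
    by (rule continuous_on_compose[OF continuous_on_linepath]) (simp add: linepath_image_01 cu)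
  have g_unit: "x \<in> {0..1} \<Longrightarrow> cmod (g x) = 1" for x
    using us linepath_image_01[of a b] unfolding g_def by (auto simp: image_subset_iff)
  obtain q where cq: "continuous_on {0..1} q" and gq: "\<And>x. x \<in> {0..1} \<Longrightarrow> g x = exp (q x)"
    using continuous_logarithm_on_contractible[OF cg convex_imp_contractible[OF convex_real_interval(5)]]
      g_unit by (metis norm_zero zero_neq_one)
  define \<phi> where "\<phi> x = Im (q x)" for x
  have q\<phi>: "q x = \<i> * complex_of_real (\<phi> x)" if "x \<in> {0..1}" for x
  proof -
    have "Re (q x) = 0" using g_unit[OF that] gq[OF that] by (simp add: norm_exp_eq_Re)
    then show ?thesis unfolding \<phi>_def by (simp add: complex_eq_iff)
  qed
  have "winding_number g 0 = winding_number (exp \<circ> q) 0"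
    by (rule winding_number_cong) (simp add: gq)
  also have "\<dots> = (q 1 - q 0) / (2 * of_real pi * \<i>)"
    using winding_number_compose_exp[of q] cq unfolding path_def pathfinish_def pathstart_def by simp
  also have "\<dots> = complex_of_real ((\<phi> 1 - \<phi> 0) / (2 * pi))"
    using q\<phi>[of 1] q\<phi>[of 0] by (simp add: field_simps)
  finally have "\<phi> 1 - \<phi> 0 = 2 * pi * Re (winding_number g 0)" by simp
  moreover have "continuous_on {0..1} \<phi>" unfolding \<phi>_def by (intro continuous_intros cq)
  ultimately show ?thesis
    using that gq q\<phi> segment_pullback_eq_linepath unfolding g_def by simp
qed

lemma frac_energy_across_quarter_turn:
  fixes g :: "real \<Rightarrow> complex" and \<phi> :: "real \<Rightarrow> real"
  assumes cg: "continuous_on UNIV g" and xy: "x < y" "y - x \<le> 1"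
    and lift: "g x = exp (\<i> * complex_of_real (\<phi> x))" "g y = exp (\<i> * complex_of_real (\<phi> y))"
    and quarter: "cos (\<phi> y - \<phi> x) = 0"
    and s: "0 < s0" "s0 \<le> s" "s < 1"
  shows "ennreal (energy_const s0 / (1 - s)) \<le> frac_energy g s {x..<y}"
proof -
  define l where "l = y - x"
  have "0 < l" "l \<le> 1" unfolding l_def using xy by auto
  have "exp (\<i> * complex_of_real (\<phi> y))
      = exp (\<i> * complex_of_real (\<phi> x) + \<i> * complex_of_real (\<phi> y - \<phi> x))"
    by (simp add: algebra_simps)
  then have "g y - g x = g x * (exp (\<i> * complex_of_real (\<phi> y - \<phi> x)) - 1)"
    unfolding lift exp_add by (simp add: algebra_simps)
  moreover have "cmod (g x) = 1" unfolding lift by simp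
  moreover have "1 \<le> cmod (exp (\<i> * complex_of_real (\<phi> y - \<phi> x)) - 1)"
    by (rule norm_exp_quarter_turn_minus_one[OF quarter])
  ultimately have "1 \<le> cmod (g (x + l) - g x)" by (simp add: l_def norm_mult)
  note jump_energy = frac_energy_across_jump[OF cg \<open>0 < l\<close> s this]
  have "energy_const s0 / (1 - s) * 1 \<le> energy_const s0 / (1 - s) * l powr (-s)"
    using \<open>0 < l\<close> \<open>l \<le> 1\<close> s energy_const_pos[OF s(1)] powr_mono2'[of "-s" l 1]
    by (intro mult_left_mono) auto
  then have "ennreal (energy_const s0 / (1 - s)) \<le> ennreal (energy_const s0 / (1 - s) * l powr (-s))"
    by (intro ennreal_leI) simp
  also have "\<dots> \<le> frac_energy g s {x..<y}"
    using jump_energy by (simp add: l_def)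
  finally show ?thesis .
qed

lemma frac_energy_ge_quarter_turns:
  fixes g :: "real \<Rightarrow> complex" and \<phi> :: "real \<Rightarrow> real"
  assumes cg: "continuous_on UNIV g" and c\<phi>: "continuous_on {0..1} \<phi>"
    and lift: "\<And>x. x \<in> {0..1} \<Longrightarrow> g x = exp (\<i> * complex_of_real (\<phi> x))"
    and turns: "real D * (pi / 2) \<le> \<bar>\<phi> 1 - \<phi> 0\<bar>"
    and s: "0 < s0" "s0 \<le> s" "s < 1"
  shows "ennreal (real D * (energy_const s0 / (1 - s))) \<le> frac_energy g s {0..1}"
proof -
  obtain \<sigma> :: real where \<sigma>: "\<sigma> = 1 \<or> \<sigma> = -1" "\<sigma> * (\<phi> 1 - \<phi> 0) = \<bar>\<phi> 1 - \<phi> 0\<bar>"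
    by (cases "0 \<le> \<phi> 1 - \<phi> 0") (auto intro: that[of 1] that[of "-1"])
  have "continuous_on {0..1} (\<lambda>x. \<sigma> * \<phi> x)" by (intro continuous_intros c\<phi>)
  moreover have "\<sigma> * \<phi> 0 + real D * (pi / 2) \<le> \<sigma> * \<phi> 1" using turns \<sigma>(2) by (simp add: algebra_simps)
  ultimately obtain \<tau> where \<tau>: "\<tau> 0 = 0"
    "\<And>k. k \<le> D \<Longrightarrow> \<tau> k \<in> {0..1} \<and> \<sigma> * \<phi> (\<tau> k) = \<sigma> * \<phi> 0 + real k * (pi / 2)"
    "\<And>k. k < D \<Longrightarrow> \<tau> k < \<tau> (Suc k)"
    using increasing_level_crossings[of "\<lambda>x. \<sigma> * \<phi> x" "pi / 2" D] by auto
  have piece: "ennreal (energy_const s0 / (1 - s)) \<le> frac_energy g s {\<tau> k..<\<tau> (Suc k)}"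
    if "k < D" for k
  proof (rule frac_energy_across_quarter_turn[OF cg \<tau>(3)[OF that] _ lift lift _ s])
    have "\<sigma> * (\<phi> (\<tau> (Suc k)) - \<phi> (\<tau> k)) = pi / 2"
      using \<tau>(2)[of k] \<tau>(2)[of "Suc k"] that by (simp add: algebra_simps)
    then have "\<phi> (\<tau> (Suc k)) - \<phi> (\<tau> k) = \<sigma> * (pi / 2)" using \<sigma>(1) by auto
    then have "cos (\<phi> (\<tau> (Suc k)) - \<phi> (\<tau> k)) = cos (\<sigma> * (pi / 2))" by (rule arg_cong)
    also have "\<dots> = 0" using \<sigma>(1) by auto
    finally show "cos (\<phi> (\<tau> (Suc k)) - \<phi> (\<tau> k)) = 0" .
  qed (use \<tau>(2)[of k] \<tau>(2)[of "Suc k"] that in auto)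
  have "ennreal (real D * (energy_const s0 / (1 - s))) = of_nat D * ennreal (energy_const s0 / (1 - s))"
    using energy_const_pos[OF s(1)] s
    by (subst ennreal_mult) (simp_all add: ennreal_of_nat_eq_real_of_nat del: times_divide_eq_right)
  also have "\<dots> = (\<Sum>k<D. ennreal (energy_const s0 / (1 - s)))" by simp
  also have "\<dots> \<le> (\<Sum>k<D. frac_energy g s {\<tau> k..<\<tau> (Suc k)})" by (intro sum_mono piece) simp
  also have "\<dots> \<le> frac_energy g s {0..1}"
    by (rule frac_energy_sum_intervals_le[OF cg]) (use \<tau> in auto)
  finally show ?thesis .
qed

lemma seg_seminorm_sq_ge_winding:
  fixes u :: "complex \<Rightarrow> complex" and D :: nat
  assumes cu: "continuous_on (closed_segment a b) u" and us: "u ` closed_segment a b \<subseteq> sphere 0 1"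
    and "a \<noteq> b" and s: "0 < s0" "s0 \<le> s" "s < 1"
    and D: "real D \<le> 4 * \<bar>Re (winding_number (u \<circ> linepath a b) 0)\<bar>"
  shows "ennreal (energy_const s0 * real D / (1 - s) * cmod (b - a) powr (-s))
    \<le> seg_seminorm_sq u a b ((1 + s) / 2)"
proof -
  obtain \<phi> where c\<phi>: "continuous_on {0..1} \<phi>"
    and lift: "\<And>x. x \<in> {0..1} \<Longrightarrow> segment_pullback u a b x = exp (\<i> * complex_of_real (\<phi> x))"
    and turn: "\<phi> 1 - \<phi> 0 = 2 * pi * Re (winding_number (u \<circ> linepath a b) 0)"
    using segment_pullback_lift[OF cu us] by blast
  have "real D * (pi / 2) \<le> \<bar>\<phi> 1 - \<phi> 0\<bar>"
    using mult_right_mono[OF D, of "pi / 2"] unfolding turn by (simp add: abs_mult)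
  then have "ennreal (real D * (energy_const s0 / (1 - s)))
      \<le> frac_energy (segment_pullback u a b) s {0..1}"
    by (intro frac_energy_ge_quarter_turns[OF continuous_on_segment_pullback[OF cu] c\<phi>])
      (use lift s in auto)
  then have "ennreal (cmod (b - a) powr (-s)) * ennreal (real D * (energy_const s0 / (1 - s)))
      \<le> seg_seminorm_sq u a b ((1 + s) / 2)"
    unfolding seg_seminorm_sq_eq_frac_energy[OF cu \<open>a \<noteq> b\<close>] by (rule mult_left_mono) simp
  moreover have "ennreal (cmod (b - a) powr (-s)) * ennreal (real D * (energy_const s0 / (1 - s)))
      = ennreal (energy_const s0 * real D / (1 - s) * cmod (b - a) powr (-s))"
    using energy_const_pos[OF s(1)] s by (subst ennreal_mult[symmetric]) (simp_all add: mult_ac)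
  ultimately show ?thesis by simp
qed

section \<open>The square\<close>

lemma i_power_mod_4: "\<i> ^ (n mod 4) = \<i> ^ n"
proof -
  have "\<i> ^ n = \<i> ^ (4 * (n div 4) + n mod 4)" by simp
  also have "\<dots> = (\<i> ^ 4) ^ (n div 4) * \<i> ^ (n mod 4)" by (simp only: power_add power_mult)
  also have "\<i> ^ 4 = (1::complex)" by (simp add: eval_nat_numeral)
  finally show ?thesis by simp
qed

lemma sq_vertex_Suc_diff:
  "sq_vertex x theta t (Suc k) - sq_vertex x theta t k = - 2 * complex_of_real t * cis theta * \<i> ^ k"
proof -
  have "sq_vertex x theta t (Suc k) - sq_vertex x theta t k
      = complex_of_real t * cis theta * (\<i> ^ Suc k - \<i> ^ k) * (1 + \<i>)"
    unfolding sq_vertex_def i_power_mod_4 by (simp add: algebra_simps)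
  also have "\<dots> = - 2 * complex_of_real t * cis theta * \<i> ^ k"
    by (simp add: algebra_simps)
  finally show ?thesis .
qed

lemma norm_sq_side: "0 < t \<Longrightarrow> cmod (sq_vertex x theta t (Suc k) - sq_vertex x theta t k) = 2 * t"
  unfolding sq_vertex_Suc_diff by (simp add: norm_mult norm_power)

lemma deg_on_square_eq_sum_sides:
  fixes u :: "complex \<Rightarrow> complex" and x :: complex and theta t :: real
  defines "W j \<equiv> winding_number (u \<circ> linepath (sq_vertex x theta t j) (sq_vertex x theta t (Suc j))) 0"
  assumes cu: "continuous_on (sq_boundary x theta t) u" and us: "u ` sq_boundary x theta t \<subseteq> sphere 0 1"
  shows "deg_on_square u x theta t = (\<Sum>j<4. W j)" and "deg_on_square u x theta t \<in> \<int>"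
proof -
  define V where "V = sq_vertex x theta t"
  define P where "P j = u \<circ> linepath (V j) (V (Suc j))" for j
  have side: "path (P j)" "0 \<notin> path_image (P j)" "pathstart (P j) = u (V j)"
    "pathfinish (P j) = u (V (Suc j))" if "j < 4" for j
  proof -
    have sub: "closed_segment (V j) (V (Suc j)) \<subseteq> sq_boundary x theta t"
      unfolding sq_boundary_def V_def using that by blast
    show "path (P j)" unfolding P_def
      by (rule path_continuous_image) (use continuous_on_subset[OF cu sub] in auto)
    have "path_image (P j) \<subseteq> sphere 0 1" unfolding P_def path_image_compose using us sub by auto
    then show "0 \<notin> path_image (P j)" by auto
    show "pathstart (P j) = u (V j)" "pathfinish (P j) = u (V (Suc j))"
      unfolding P_def by (simp_all add: pathstart_compose pathfinish_compose)
  qed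
  have "V 4 = V 0" unfolding V_def sq_vertex_def by simp
  then have loop: "u \<circ> sq_loop x theta t = P 0 +++ (P 1 +++ (P 2 +++ P 3))"
    unfolding sq_loop_def P_def path_compose_join V_def by (simp add: numeral_eq_Suc)
  have "path (P 2 +++ P 3)" "0 \<notin> path_image (P 2 +++ P 3)"
    "winding_number (P 2 +++ P 3) 0 = W 2 + W 3" "pathstart (P 2 +++ P 3) = u (V 2)"
    using side[of 2] side[of 3] unfolding W_def P_def V_def
    by (auto simp: path_image_join winding_number_join numeral_eq_Suc)
  then have "path (P 1 +++ (P 2 +++ P 3))" "0 \<notin> path_image (P 1 +++ (P 2 +++ P 3))"
    "winding_number (P 1 +++ (P 2 +++ P 3)) 0 = W 1 + W 2 + W 3" "pathstart (P 1 +++ (P 2 +++ P 3)) = u (V 1)"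
    using side[of 1] unfolding W_def P_def V_def
    by (auto simp: path_image_join winding_number_join numeral_eq_Suc)
  then have "deg_on_square u x theta t = W 0 + W 1 + W 2 + W 3"
    and loop_path: "path (u \<circ> sq_loop x theta t)" "0 \<notin> path_image (u \<circ> sq_loop x theta t)"
    using side[of 0] unfolding deg_on_square_def loop W_def P_def V_def
    by (auto simp: path_image_join winding_number_join numeral_eq_Suc)
  then show "deg_on_square u x theta t = (\<Sum>j<4. W j)" by (simp add: eval_nat_numeral)
  have "pathfinish (u \<circ> sq_loop x theta t) = pathstart (u \<circ> sq_loop x theta t)"
    unfolding pathfinish_compose pathstart_compose sq_loop_def by simp
  then show "deg_on_square u x theta t \<in> \<int>"
    unfolding deg_on_square_def using integer_winding_number_eq[OF loop_path] by simp
qed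

lemma exists_term_ge_average:
  fixes f :: "'a \<Rightarrow> real"
  assumes "finite A" "A \<noteq> {}"
  obtains j where "j \<in> A" "\<bar>sum f A\<bar> \<le> real (card A) * \<bar>f j\<bar>"
proof -
  have "Max ((\<lambda>i. \<bar>f i\<bar>) ` A) \<in> (\<lambda>i. \<bar>f i\<bar>) ` A" using assms by (intro Max_in) auto
  then obtain j where j: "j \<in> A" "Max ((\<lambda>i. \<bar>f i\<bar>) ` A) = \<bar>f j\<bar>" by auto
  have "\<bar>sum f A\<bar> \<le> (\<Sum>i\<in>A. \<bar>f i\<bar>)" by (rule sum_abs)
  also have "\<dots> \<le> real (card A) * \<bar>f j\<bar>"
    by (rule sum_bounded_above) (use assms j in \<open>auto simp flip: j(2)\<close>)
  finally show ?thesis using that j(1) by blast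
qed

lemma exists_side_with_quarter_degree:
  fixes u :: "complex \<Rightarrow> complex" and x :: complex and theta t :: real
  defines "V \<equiv> sq_vertex x theta t"
  assumes cu: "continuous_on (sq_boundary x theta t) u" and us: "u ` sq_boundary x theta t \<subseteq> sphere 0 1"
  obtains j m where "j < 4" "deg_on_square u x theta t = of_int m"
    "real (nat \<bar>m\<bar>) \<le> 4 * \<bar>Re (winding_number (u \<circ> linepath (V j) (V (Suc j))) 0)\<bar>"
proof -
  define W where "W j = winding_number (u \<circ> linepath (V j) (V (Suc j))) 0" for j
  obtain m :: int where m: "deg_on_square u x theta t = of_int m"
    using deg_on_square_eq_sum_sides(2)[OF cu us] by (auto elim: Ints_cases)
  have "real_of_int m = Re (deg_on_square u x theta t)" using m by simp
  also have "\<dots> = (\<Sum>j<4. Re (W j))"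
    using deg_on_square_eq_sum_sides(1)[OF cu us] unfolding W_def V_def by (simp add: Re_sum)
  finally have "real (nat \<bar>m\<bar>) = \<bar>\<Sum>j<4. Re (W j)\<bar>" by simp
  moreover obtain j where "j \<in> {..<4::nat}" "\<bar>\<Sum>j<4. Re (W j)\<bar> \<le> real (card {..<4::nat}) * \<bar>Re (W j)\<bar>"
    by (rule exists_term_ge_average[of "{..<4::nat}" "\<lambda>j. Re (W j)"]) (auto simp: lessThan_empty_iff)
  ultimately show ?thesis using that m unfolding W_def by auto
qed

lemma half_powr_neg_le_double_powr_neg:
  fixes t s :: real
  assumes "0 < t" "0 \<le> s" "s \<le> 1"
  shows "t powr (-s) / 2 \<le> (2 * t) powr (-s)"
proof -
  have "1 / 2 \<le> (2::real) powr (-s)" using powr_mono[of "-1" "-s" 2] assms by (simp add: powr_minus)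
  then have "1 / 2 * t powr (-s) \<le> 2 powr (-s) * t powr (-s)" by (rule mult_right_mono) simp
  also have "\<dots> = (2 * t) powr (-s)" using assms by (simp add: powr_mult)
  finally show ?thesis by simp
qed

theorem lemma3p5:
  fixes s0 :: real
  assumes "0 < s0" and "s0 < 1"
  shows "\<exists>c>0. \<forall>(x::complex) (theta::real) (t::real) (u::complex \<Rightarrow> complex) (s::real).
           0 < t \<longrightarrow>
           continuous_on (sq_boundary x theta t) u \<longrightarrow>
           u ` sq_boundary x theta t \<subseteq> sphere 0 1 \<longrightarrow>
           s0 < s \<longrightarrow> s < 1 \<longrightarrow>
           (\<Sum>j<4. seg_seminorm_sq u (sq_vertex x theta t j) (sq_vertex x theta t (Suc j)) ((1 + s) / 2))
             \<ge> ennreal (c * (\<bar>Re (deg_on_square u x theta t)\<bar> / (1 - s)) * t powr (- s))"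
proof (intro exI[of _ "energy_const s0 / 2"] conjI allI impI)
  show "0 < energy_const s0 / 2" using energy_const_pos assms by simp
next
  fix x :: complex and theta t :: real and u :: "complex \<Rightarrow> complex" and s :: real
  assume t: "0 < t" and cu: "continuous_on (sq_boundary x theta t) u"
    and us: "u ` sq_boundary x theta t \<subseteq> sphere 0 1" and s: "s0 < s" "s < 1"
  define V where "V = sq_vertex x theta t"
  obtain j m where j: "j < 4" and m: "deg_on_square u x theta t = of_int m"
    and quarter: "real (nat \<bar>m\<bar>) \<le> 4 * \<bar>Re (winding_number (u \<circ> linepath (V j) (V (Suc j))) 0)\<bar>"
    using exists_side_with_quarter_degree[OF cu us] unfolding V_def by blast
  have side: "closed_segment (V j) (V (Suc j)) \<subseteq> sq_boundary x theta t"
    unfolding sq_boundary_def V_def using j by blast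
  have "ennreal (energy_const s0 / 2 * (\<bar>Re (deg_on_square u x theta t)\<bar> / (1 - s)) * t powr (- s))
      \<le> ennreal (energy_const s0 * real (nat \<bar>m\<bar>) / (1 - s) * cmod (V (Suc j) - V j) powr (-s))"
    using mult_left_mono[OF half_powr_neg_le_double_powr_neg[OF t, of s],
        of "energy_const s0 * \<bar>real_of_int m\<bar> / (1 - s)"] energy_const_pos[OF assms(1)] s assms
    unfolding m V_def norm_sq_side[OF t] by (intro ennreal_leI) (simp add: mult_ac)
  also have "\<dots> \<le> seg_seminorm_sq u (V j) (V (Suc j)) ((1 + s) / 2)"
    using norm_sq_side[OF t, of x theta j] t quarter s assms unfolding V_def[symmetric]
    by (intro seg_seminorm_sq_ge_winding continuous_on_subset[OF cu side]) (use us side in auto)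
  also have "\<dots> \<le> (\<Sum>j<4. seg_seminorm_sq u (V j) (V (Suc j)) ((1 + s) / 2))"
    by (rule member_le_sum) (use j in auto)
  finally show "(\<Sum>j<4. seg_seminorm_sq u (sq_vertex x theta t j) (sq_vertex x theta t (Suc j)) ((1 + s) / 2))
      \<ge> ennreal (energy_const s0 / 2 * (\<bar>Re (deg_on_square u x theta t)\<bar> / (1 - s)) * t powr (- s))"
    unfolding V_def .
qed

end
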